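(* Let $k\ge 1$ be an integer and define $f:\mathbb{N}^k\to\mathbb{R}$ by \[ f(n_1,\dots,n_k) = \mu(n_1)\cdots\mu(n_k) \prod_{p\mid n_1\cdots n_k} \frac{p}{p+1} \times \mathbf{1}_{n_1\cdots n_k = \square}, \] where $\mu$ is the Möbius function, the product is over primes $p$ dividing $n_1\cdots n_k$, and $\mathbf{1}_{n=\square}$ equals $1$ if $n$ is a perfect square and $0$ otherwise. Then \[ \sum_{n_1, \dots, n_k =1}^\infty \frac{f(n_1,\dots, n_k)}{n_1^{s_1}\cdots n_k^{s_k}} = \left(\prod_{\substack{I \subseteq \{1,\dots,k\} \\ |I|=2 }}\zeta(s_I)\right) E(s_1,\dots,s_k), \] where for a subset $I=\{\ell_1,\dots,\ell_r\}\subseteq\{1,\dots,k\}$ we write $s_I := s_{\ell_1}+\dots+s_{\ell_r}$, $\zeta$ is the Riemann zeta function, and $E(s_1,\dots,s_k)$ is a Dirichlet series in $k$ variables that is absolutely convergent for $\operatorname{Re}(s_j) > 1/4$ for all $1\leq j \leq k$. *)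

theory Defs
  imports "HOL-Analysis.Analysis" "HOL-Computational_Algebra.Squarefree"
begin

text \<open>Moebius function (mu 0 = 0 by convention; only n \<ge> 1 is used).\<close>
definition moebius_mu :: "nat \<Rightarrow> int" where
  "moebius_mu n = (if n = 0 \<or> \<not> squarefree n then 0
                   else (-1) ^ card (prime_factors n))"

text \<open>Riemann zeta function, given by its Dirichlet series; it is only used at
  points with real part > 1, where this series converges absolutely.\<close>
definition zeta :: "complex \<Rightarrow> complex" where
  "zeta s = (\<Sum>\<^sub>\<infinity>n\<in>{1::nat..}. 1 / (of_nat n powr s))"

definition is_square :: "nat \<Rightarrow> bool" where
  "is_square n \<longleftrightarrow> (\<exists>m. n = m ^ 2)"

definition tuples :: "nat \<Rightarrow> (nat \<Rightarrow> nat) set" where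
  "tuples k = PiE {1..k} (\<lambda>_. {1..})"

definition fk :: "nat \<Rightarrow> (nat \<Rightarrow> nat) \<Rightarrow> real" where
  "fk k n = (let P = (\<Prod>j\<in>{1..k}. n j) in
     (\<Prod>j\<in>{1..k}. real_of_int (moebius_mu (n j)))
     * (\<Prod>p\<in>prime_factors P. real p / (real p + 1))
     * (if is_square P then 1 else 0))"

definition npow :: "nat \<Rightarrow> (nat \<Rightarrow> nat) \<Rightarrow> (nat \<Rightarrow> complex) \<Rightarrow> complex" where
  "npow k n s = (\<Prod>j\<in>{1..k}. of_nat (n j) powr s j)"

end

theory Submission
  imports Defs
begin

text \<open>Both \<^const>\<open>fk\<close> and the series \<open>E\<close> constructed below are multiplicative functions of the
  tuple \<open>n\<close>: their value is a product over the primes \<open>p\<close> of a local factor evaluated at the vector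
  of \<open>p\<close>-adic valuations of the \<open>n_j\<close>. If the nontrivial terms of the local factors are
  \<open>O(p^-\<delta>)\<close> with \<open>\<delta> > 1\<close>, such a Dirichlet series converges absolutely and is the limit of its
  partial Euler products.

  The local factor of \<^const>\<open>fk\<close> at \<open>p\<close> is \<open>F_p = 1 + p/(p+1) \<Sum>_a p^(-a\<cdot>s)\<close>, summed over the
  nonzero 0-1 vectors \<open>a\<close> of even weight, and \<open>E\<close> is defined by the local factors
  \<open>E_p = F_p \<Prod>_{|I|=2} (1 - p^(-s_I))\<close>. The terms of weight 2 of \<open>F_p\<close> cancel against the
  factors \<open>1 - p^(-s_I)\<close> up to \<open>-p^(-s_I)/(p+1)\<close>, there are no terms of odd weight, and all
  other terms have weight at least 4. So the nontrivial terms of \<open>E_p\<close> are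
  \<open>O(p^(-min(1+\<sigma>, 4\<sigma>)))\<close> when \<open>Re s_j \<ge> \<sigma>\<close>, which is summable over \<open>p\<close> for \<open>\<sigma> > 1/4\<close>.
  Finally, \<open>\<zeta>(t) \<Prod>_{p\<le>N} (1 - p^(-t)) \<longrightarrow> 1\<close> for \<open>Re t > 1\<close> turns the identity
  \<open>E_p = F_p \<Prod>_I (1 - p^(-s_I))\<close> of Euler factors into the factorization.\<close>

section \<open>Multiplicative functions of tuples\<close>

definition primes_le :: "nat \<Rightarrow> nat set" where
  "primes_le N = {p. prime p \<and> p \<le> N}"

definition pos_tuples :: "nat set \<Rightarrow> (nat \<Rightarrow> nat) set" where
  "pos_tuples K = PiE K (\<lambda>_. {1..})"

definition tuple_powr :: "nat set \<Rightarrow> (nat \<Rightarrow> nat) \<Rightarrow> (nat \<Rightarrow> complex) \<Rightarrow> complex" where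
  "tuple_powr K n s = (\<Prod>j\<in>K. of_nat (n j) powr s j)"

definition exp_box :: "nat set \<Rightarrow> nat \<Rightarrow> (nat \<Rightarrow> nat) set" where
  "exp_box K D = PiE K (\<lambda>_. {0..D})"

definition zero_vec :: "nat set \<Rightarrow> nat \<Rightarrow> nat" where
  "zero_vec K = restrict (\<lambda>_. 0) K"

definition valuation_vec :: "nat set \<Rightarrow> nat \<Rightarrow> (nat \<Rightarrow> nat) \<Rightarrow> nat \<Rightarrow> nat" where
  "valuation_vec K p n = restrict (\<lambda>j. multiplicity p (n j)) K"

definition prime_monomial :: "nat set \<Rightarrow> (nat \<Rightarrow> complex) \<Rightarrow> nat \<Rightarrow> (nat \<Rightarrow> nat) \<Rightarrow> complex" where
  "prime_monomial K s p a = (\<Prod>j\<in>K. inverse (of_nat p powr s j) ^ a j)"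

text \<open>The primes up to \<open>\<Prod>j\<in>K. n j\<close> include all prime divisors of the \<open>n j\<close>; when
  \<open>G p (zero_vec K) = 1\<close>, any larger finite set of primes gives the same product.\<close>
definition mult_fun ::
    "nat set \<Rightarrow> (nat \<Rightarrow> (nat \<Rightarrow> nat) \<Rightarrow> 'b::comm_monoid_mult) \<Rightarrow> (nat \<Rightarrow> nat) \<Rightarrow> 'b" where
  "mult_fun K G n = (\<Prod>p\<in>primes_le (\<Prod>j\<in>K. n j). G p (valuation_vec K p n))"

definition tuple_of_exps :: "nat set \<Rightarrow> nat set \<Rightarrow> (nat \<Rightarrow> nat \<Rightarrow> nat) \<Rightarrow> nat \<Rightarrow> nat" where
  "tuple_of_exps K P \<alpha> = restrict (\<lambda>j. \<Prod>p\<in>P. p ^ \<alpha> p j) K"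

definition smooth_tuples :: "nat set \<Rightarrow> nat \<Rightarrow> nat \<Rightarrow> (nat \<Rightarrow> nat) set" where
  "smooth_tuples K D N = tuple_of_exps K (primes_le N) ` PiE (primes_le N) (\<lambda>_. exp_box K D)"

lemma finite_primes_le [simp]: "finite (primes_le N)"
  unfolding primes_le_def by (rule finite_subset[of _ "{..N}"]) auto

lemma prime_of_primes_le: "p \<in> primes_le N \<Longrightarrow> prime p"
  unfolding primes_le_def by simp

lemma primes_le_prime: "\<forall>q\<in>primes_le N. prime q"
  unfolding primes_le_def by simp

lemma prime_divisor_in_primes_le:
  assumes "prime p" "p dvd m" "0 < m" "m \<le> N"
  shows "p \<in> primes_le N"
  using assms dvd_imp_le[of p m] unfolding primes_le_def by auto

lemma finite_exp_box [simp]: "finite K \<Longrightarrow> finite (exp_box K D)"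
  unfolding exp_box_def by (intro finite_PiE) auto

lemma zero_vec_in_exp_box [simp]: "zero_vec K \<in> exp_box K D"
  unfolding zero_vec_def exp_box_def by auto

lemma exp_box_eqI:
  assumes "a \<in> exp_box K D" "b \<in> exp_box K D'" "\<And>j. j \<in> K \<Longrightarrow> a j = b j"
  shows "a = b"
proof (rule ext)
  fix j
  show "a j = b j"
    using assms PiE_arb[of a K _ j] PiE_arb[of b K _ j] unfolding exp_box_def
    by (cases "j \<in> K") auto
qed

lemma restrict_exp_box: "a \<in> exp_box K D \<Longrightarrow> restrict a K = a"
  unfolding exp_box_def by (simp add: PiE_restrict)

lemma pos_tuples_pos: "n \<in> pos_tuples K \<Longrightarrow> j \<in> K \<Longrightarrow> 0 < n j"
  unfolding pos_tuples_def by (auto dest!: PiE_mem)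

lemma pos_tuples_le_prod:
  assumes "finite K" "n \<in> pos_tuples K" "j \<in> K"
  shows "n j \<le> (\<Prod>j\<in>K. n j)"
  using assms pos_tuples_pos[OF assms(2)] by (intro dvd_imp_le dvd_prodI prod_pos) auto

lemma valuation_vec_eq_zero_vec:
  "(\<And>j. j \<in> K \<Longrightarrow> \<not> p dvd n j) \<Longrightarrow> valuation_vec K p n = zero_vec K"
  unfolding valuation_vec_def zero_vec_def by (intro ext) (auto simp: not_dvd_imp_multiplicity_0)

lemma prime_monomial_zero_vec [simp]: "prime_monomial K s p (zero_vec K) = 1"
  by (simp add: prime_monomial_def zero_vec_def)

lemma mult_fun_eq_prod:
  assumes K: "finite K" and n: "n \<in> pos_tuples K" and Q: "finite Q" "\<forall>q\<in>Q. prime q"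
    and dvd_Q: "\<And>p j. prime p \<Longrightarrow> j \<in> K \<Longrightarrow> p dvd n j \<Longrightarrow> p \<in> Q"
    and G0: "\<And>p. G p (zero_vec K) = 1"
  shows "mult_fun K G n = (\<Prod>p\<in>Q. G p (valuation_vec K p n))"
proof -
  define R where "R = primes_le (\<Prod>j\<in>K. n j)"
  have trivial: "G p (valuation_vec K p n) = 1" if "prime p" "\<And>j. j \<in> K \<Longrightarrow> \<not> p dvd n j" for p
    using that by (simp add: valuation_vec_eq_zero_vec G0)
  have "\<not> p dvd n j" if "p \<in> Q - R" "j \<in> K" for p j
    using that Q prime_divisor_in_primes_le[of p "n j" "\<Prod>j\<in>K. n j"]
      pos_tuples_pos[OF n] pos_tuples_le_prod[OF K n] unfolding R_def by auto
  then have "(\<Prod>p\<in>R. G p (valuation_vec K p n)) = (\<Prod>p\<in>Q \<union> R. G p (valuation_vec K p n))"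
    using Q trivial by (intro prod.mono_neutral_left) (auto simp: R_def)
  also have "\<dots> = (\<Prod>p\<in>Q. G p (valuation_vec K p n))"
    using Q dvd_Q by (intro prod.mono_neutral_right) (auto simp: R_def primes_le_def intro: trivial)
  finally show ?thesis unfolding mult_fun_def R_def .
qed

lemma valuation_vec_tuple_of_exps:
  assumes P: "finite P" "\<forall>q\<in>P. prime q" and q: "prime q"
  shows "valuation_vec K q (tuple_of_exps K P \<alpha>) = (if q \<in> P then restrict (\<alpha> q) K else zero_vec K)"
proof (rule ext)
  fix j
  have "multiplicity q (\<Prod>p\<in>P. p ^ \<alpha> p j) = (if q \<in> P then \<alpha> q j else 0)"
    using P q by (intro multiplicity_prod_prime_powers) auto
  then show "valuation_vec K q (tuple_of_exps K P \<alpha>) j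
      = (if q \<in> P then restrict (\<alpha> q) K else zero_vec K) j"
    unfolding valuation_vec_def tuple_of_exps_def zero_vec_def by auto
qed

lemma tuple_of_exps_in_pos_tuples: "\<forall>q\<in>P. prime q \<Longrightarrow> tuple_of_exps K P \<alpha> \<in> pos_tuples K"
  unfolding pos_tuples_def tuple_of_exps_def
  by (auto intro!: prod_pos simp: prime_gt_0_nat Suc_le_eq)

lemma prime_dvd_tuple_of_exps:
  assumes P: "finite P" "\<forall>q\<in>P. prime q" and q: "prime q"
    and j: "j \<in> K" and dvd: "q dvd tuple_of_exps K P \<alpha> j"
  shows "q \<in> P"
proof (rule ccontr)
  assume "q \<notin> P"
  then have "multiplicity q (tuple_of_exps K P \<alpha> j) = 0"
    using fun_cong[OF valuation_vec_tuple_of_exps[OF P q, of K \<alpha>], of j] j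
    by (simp add: valuation_vec_def zero_vec_def)
  moreover have "tuple_of_exps K P \<alpha> j \<noteq> 0"
    using pos_tuples_pos[OF tuple_of_exps_in_pos_tuples[OF P(2)] j] by simp
  ultimately show False
    using dvd q prime_multiplicity_gt_zero_iff[of q "tuple_of_exps K P \<alpha> j"] by auto
qed

lemma mult_fun_tuple_of_exps:
  assumes K: "finite K" and P: "finite P" "\<forall>q\<in>P. prime q"
    and \<alpha>: "\<alpha> \<in> PiE P (\<lambda>_. exp_box K D)" and G0: "\<And>p. G p (zero_vec K) = 1"
  shows "mult_fun K G (tuple_of_exps K P \<alpha>) = (\<Prod>p\<in>P. G p (\<alpha> p))"
proof -
  have "mult_fun K G (tuple_of_exps K P \<alpha>) = (\<Prod>p\<in>P. G p (valuation_vec K p (tuple_of_exps K P \<alpha>)))"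
    by (rule mult_fun_eq_prod[where G = G, OF K tuple_of_exps_in_pos_tuples[OF P(2)] P
          prime_dvd_tuple_of_exps[OF P] G0])
  also have "\<dots> = (\<Prod>p\<in>P. G p (\<alpha> p))"
  proof (intro prod.cong refl)
    fix p assume p: "p \<in> P"
    then show "G p (valuation_vec K p (tuple_of_exps K P \<alpha>)) = G p (\<alpha> p)"
      using P restrict_exp_box[OF PiE_mem[OF \<alpha> p]] by (simp add: valuation_vec_tuple_of_exps)
  qed
  finally show ?thesis .
qed

lemma of_nat_mult_powr: "of_nat (a * b) powr (s::complex) = of_nat a powr s * of_nat b powr s"
  using powr_times_real[of "of_nat a" "of_nat b" s] by simp

lemma of_nat_prod_powr:
  "finite P \<Longrightarrow> of_nat (\<Prod>p\<in>P. f p) powr (s::complex) = (\<Prod>p\<in>P. of_nat (f p) powr s)"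
  by (induction P rule: finite_induct) (simp_all add: of_nat_mult_powr del: of_nat_mult of_nat_prod)

lemma of_nat_power_powr: "of_nat (p ^ m) powr (s::complex) = (of_nat p powr s) ^ m"
  by (induction m) (simp_all only: power_Suc of_nat_mult_powr, simp_all)

lemma inverse_tuple_powr_tuple_of_exps:
  assumes P: "finite P"
  shows "inverse (tuple_powr K (tuple_of_exps K P \<alpha>) s) = (\<Prod>p\<in>P. prime_monomial K s p (\<alpha> p))"
proof -
  have "tuple_powr K (tuple_of_exps K P \<alpha>) s = (\<Prod>j\<in>K. \<Prod>p\<in>P. (of_nat p powr s j) ^ \<alpha> p j)"
    unfolding tuple_powr_def
  proof (intro prod.cong refl)
    fix j assume "j \<in> K"
    then show "of_nat (tuple_of_exps K P \<alpha> j) powr s j = (\<Prod>p\<in>P. (of_nat p powr s j) ^ \<alpha> p j)"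
      unfolding tuple_of_exps_def
      by (simp only: restrict_apply' of_nat_prod_powr[OF P] of_nat_power_powr)
  qed
  then have "inverse (tuple_powr K (tuple_of_exps K P \<alpha>) s)
      = (\<Prod>j\<in>K. \<Prod>p\<in>P. inverse (of_nat p powr s j) ^ \<alpha> p j)"
    by (simp add: prod_inversef[symmetric] power_inverse)
  also have "\<dots> = (\<Prod>p\<in>P. prime_monomial K s p (\<alpha> p))"
    unfolding prime_monomial_def by (rule prod.swap)
  finally show ?thesis .
qed

lemma inj_on_tuple_of_exps:
  assumes P: "finite P" "\<forall>q\<in>P. prime q"
  shows "inj_on (tuple_of_exps K P) (PiE P (\<lambda>_. exp_box K D))"
proof (rule inj_onI)
  fix \<alpha> \<beta> assume \<alpha>: "\<alpha> \<in> PiE P (\<lambda>_. exp_box K D)" and \<beta>: "\<beta> \<in> PiE P (\<lambda>_. exp_box K D)"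
    and eq: "tuple_of_exps K P \<alpha> = tuple_of_exps K P \<beta>"
  have "\<alpha> q = \<beta> q" if q: "q \<in> P" for q
  proof -
    have "restrict (\<alpha> q) K = valuation_vec K q (tuple_of_exps K P \<alpha>)"
      "restrict (\<beta> q) K = valuation_vec K q (tuple_of_exps K P \<beta>)"
      using valuation_vec_tuple_of_exps[OF P, of q K] P q by auto
    then have "restrict (\<alpha> q) K = restrict (\<beta> q) K"
      using eq by simp
    then show ?thesis
      using \<alpha> \<beta> q restrict_exp_box PiE_mem by metis
  qed
  then show "\<alpha> = \<beta>"
    using \<alpha> \<beta> by (rule PiE_ext[rotated 2])
qed

lemma smooth_tuples_subset: "smooth_tuples K D N \<subseteq> pos_tuples K"
  unfolding smooth_tuples_def using tuple_of_exps_in_pos_tuples[OF primes_le_prime] by blast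

lemma finite_smooth_tuples: "finite K \<Longrightarrow> finite (smooth_tuples K D N)"
  unfolding smooth_tuples_def by (intro finite_imageI finite_PiE) auto

lemma mem_smooth_tuplesI:
  assumes K: "finite K" and n: "n \<in> pos_tuples K" and le_N: "\<And>j. j \<in> K \<Longrightarrow> n j \<le> N"
    and in_box: "\<And>p. p \<in> primes_le N \<Longrightarrow> valuation_vec K p n \<in> exp_box K D"
  shows "n \<in> smooth_tuples K D N"
  unfolding smooth_tuples_def
proof
  let ?P = "primes_le N"
  show "(\<lambda>p\<in>?P. valuation_vec K p n) \<in> PiE ?P (\<lambda>_. exp_box K D)"
    using in_box by auto
  have "n j = tuple_of_exps K ?P (\<lambda>p\<in>?P. valuation_vec K p n) j" for j
  proof (cases "j \<in> K")
    case True
    have pos: "0 < n j" using pos_tuples_pos[OF n True] .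
    have "n j = (\<Prod>p\<in>prime_factors (n j). p ^ multiplicity p (n j))"
      using prime_factorization_nat[OF pos] .
    also have "\<dots> = (\<Prod>p\<in>?P. p ^ multiplicity p (n j))"
      using pos le_N[OF True]
      by (intro prod.mono_neutral_left)
        (auto simp: in_prime_factors_iff not_dvd_imp_multiplicity_0
          intro: prime_divisor_in_primes_le, auto simp: primes_le_def)
    finally show ?thesis
      using True by (simp add: tuple_of_exps_def valuation_vec_def)
  next
    case False
    then show ?thesis
      using PiE_arb[of n K _ j] n by (simp add: tuple_of_exps_def pos_tuples_def)
  qed
  then show "n = tuple_of_exps K ?P (\<lambda>p\<in>?P. valuation_vec K p n)" ..
qed

lemma sum_smooth_tuples_eq_prod:
  fixes h :: "(nat \<Rightarrow> nat) \<Rightarrow> 'b::comm_semiring_1"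
  assumes K: "finite K"
    and h: "\<And>\<alpha>. \<alpha> \<in> PiE (primes_le N) (\<lambda>_. exp_box K D) \<Longrightarrow>
              h (tuple_of_exps K (primes_le N) \<alpha>) = (\<Prod>p\<in>primes_le N. g p (\<alpha> p))"
  shows "sum h (smooth_tuples K D N) = (\<Prod>p\<in>primes_le N. \<Sum>a\<in>exp_box K D. g p a)"
proof -
  let ?A = "PiE (primes_le N) (\<lambda>_. exp_box K D)"
  have "inj_on (tuple_of_exps K (primes_le N)) ?A"
    by (rule inj_on_tuple_of_exps) (auto dest: prime_of_primes_le)
  then have "sum h (smooth_tuples K D N) = (\<Sum>\<alpha>\<in>?A. h (tuple_of_exps K (primes_le N) \<alpha>))"
    unfolding smooth_tuples_def by (simp add: sum.reindex)
  also have "\<dots> = (\<Sum>\<alpha>\<in>?A. \<Prod>p\<in>primes_le N. g p (\<alpha> p))"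
    using h by (rule sum.cong[OF refl])
  also have "\<dots> = (\<Prod>p\<in>primes_le N. \<Sum>a\<in>exp_box K D. g p a)"
    using K by (intro prod_sum_PiE[symmetric]) auto
  finally show ?thesis .
qed

lemma mult_fun_div_tuple_powr_tuple_of_exps:
  assumes K: "finite K" and P: "finite P" "\<forall>q\<in>P. prime q"
    and \<alpha>: "\<alpha> \<in> PiE P (\<lambda>_. exp_box K D)" and G0: "\<And>p. G p (zero_vec K) = 1"
  shows "mult_fun K G (tuple_of_exps K P \<alpha>) / tuple_powr K (tuple_of_exps K P \<alpha>) s
           = (\<Prod>p\<in>P. G p (\<alpha> p) * prime_monomial K s p (\<alpha> p))"
proof -
  have "mult_fun K G (tuple_of_exps K P \<alpha>) / tuple_powr K (tuple_of_exps K P \<alpha>) s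
      = (\<Prod>p\<in>P. G p (\<alpha> p)) * (\<Prod>p\<in>P. prime_monomial K s p (\<alpha> p))"
    by (simp only: divide_inverse mult_fun_tuple_of_exps[where G = G, OF K P \<alpha> G0]
        inverse_tuple_powr_tuple_of_exps[OF P(1)])
  then show ?thesis
    by (simp only: prod.distrib)
qed

section \<open>Euler products of multiplicative functions of tuples\<close>

locale bounded_euler_factors =
  fixes K :: "nat set" and G :: "nat \<Rightarrow> (nat \<Rightarrow> nat) \<Rightarrow> complex" and D :: nat
    and s :: "nat \<Rightarrow> complex" and C \<delta> :: real
  assumes finite_K: "finite K"
    and G_zero_vec: "\<And>p. G p (zero_vec K) = 1"
    and G_support: "\<And>p a j. prime p \<Longrightarrow> G p a \<noteq> 0 \<Longrightarrow> j \<in> K \<Longrightarrow> a j \<le> D"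
    and G_bound: "\<And>p a. prime p \<Longrightarrow> a \<in> exp_box K D \<Longrightarrow> a \<noteq> zero_vec K \<Longrightarrow>
                    norm (G p a * prime_monomial K s p a) \<le> C * real p powr - \<delta>"
    and exponent_gt_1: "\<delta> > 1"
begin

lemma sum_smooth_tuples:
  "(\<Sum>n\<in>smooth_tuples K D N. mult_fun K G n / tuple_powr K n s)
     = (\<Prod>p\<in>primes_le N. \<Sum>a\<in>exp_box K D. G p a * prime_monomial K s p a)"
proof (rule sum_smooth_tuples_eq_prod[OF finite_K])
  fix \<alpha> assume "\<alpha> \<in> PiE (primes_le N) (\<lambda>_. exp_box K D)"
  then show "mult_fun K G (tuple_of_exps K (primes_le N) \<alpha>)
        / tuple_powr K (tuple_of_exps K (primes_le N) \<alpha>) s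
      = (\<Prod>p\<in>primes_le N. G p (\<alpha> p) * prime_monomial K s p (\<alpha> p))"
    by (rule mult_fun_div_tuple_powr_tuple_of_exps[where G = G,
          OF finite_K finite_primes_le primes_le_prime _ G_zero_vec])
qed

lemma sum_norm_smooth_tuples:
  "(\<Sum>n\<in>smooth_tuples K D N. norm (mult_fun K G n / tuple_powr K n s))
     = (\<Prod>p\<in>primes_le N. \<Sum>a\<in>exp_box K D. norm (G p a * prime_monomial K s p a))"
proof (rule sum_smooth_tuples_eq_prod[OF finite_K])
  fix \<alpha> assume "\<alpha> \<in> PiE (primes_le N) (\<lambda>_. exp_box K D)"
  then show "norm (mult_fun K G (tuple_of_exps K (primes_le N) \<alpha>)
        / tuple_powr K (tuple_of_exps K (primes_le N) \<alpha>) s)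
      = (\<Prod>p\<in>primes_le N. norm (G p (\<alpha> p) * prime_monomial K s p (\<alpha> p)))"
    by (simp only: mult_fun_div_tuple_powr_tuple_of_exps[where G = G,
          OF finite_K finite_primes_le primes_le_prime _ G_zero_vec] prod_norm)
qed

lemma eventually_subset_smooth_tuples:
  assumes F: "finite F" "\<And>n. n \<in> F \<Longrightarrow> n \<in> pos_tuples K \<and> mult_fun K G n \<noteq> 0"
  shows "eventually (\<lambda>N. F \<subseteq> smooth_tuples K D N) sequentially"
proof -
  have "n \<in> smooth_tuples K D N" if N: "N \<ge> (\<Sum>m\<in>F. \<Sum>i\<in>K. m i)" and n: "n \<in> F" for n N
  proof (rule mem_smooth_tuplesI[OF finite_K])
    show n_pos: "n \<in> pos_tuples K" using F(2)[OF n] ..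
    have le_N: "n j \<le> N" if "j \<in> K" for j
    proof -
      have "n j \<le> (\<Sum>i\<in>K. n i)"
        using finite_K that by (intro member_le_sum) auto
      also have "\<dots> \<le> (\<Sum>m\<in>F. \<Sum>i\<in>K. m i)"
        using F(1) n by (intro member_le_sum) auto
      finally show ?thesis using N by linarith
    qed
    then show "\<And>j. j \<in> K \<Longrightarrow> n j \<le> N" .
    fix p assume p: "p \<in> primes_le N"
    have "mult_fun K G n = (\<Prod>q\<in>primes_le N. G q (valuation_vec K q n))"
      using pos_tuples_pos[OF n_pos] le_N
      by (intro mult_fun_eq_prod[OF finite_K n_pos] G_zero_vec prime_divisor_in_primes_le)
        (auto dest: prime_of_primes_le)
    then have "G p (valuation_vec K p n) \<noteq> 0"
      using F(2)[OF n] p by auto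
    then show "valuation_vec K p n \<in> exp_box K D"
      using G_support[OF prime_of_primes_le[OF p] \<open>G p (valuation_vec K p n) \<noteq> 0\<close>]
      by (auto simp: exp_box_def valuation_vec_def)
  qed
  then show ?thesis
    unfolding eventually_sequentially by blast
qed

lemma euler_factor_norm_le:
  assumes p: "prime p"
  shows "(\<Sum>a\<in>exp_box K D. norm (G p a * prime_monomial K s p a))
           \<le> 1 + card (exp_box K D) * \<bar>C\<bar> * real p powr - \<delta>"
proof -
  let ?B = "exp_box K D - {zero_vec K}"
  have "(\<Sum>a\<in>exp_box K D. norm (G p a * prime_monomial K s p a))
      = 1 + (\<Sum>a\<in>?B. norm (G p a * prime_monomial K s p a))"
    using finite_K by (subst sum.remove[of _ "zero_vec K"]) (auto simp: G_zero_vec)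
  also have "(\<Sum>a\<in>?B. norm (G p a * prime_monomial K s p a)) \<le> (\<Sum>a\<in>?B. \<bar>C\<bar> * real p powr - \<delta>)"
  proof (rule sum_mono)
    fix a assume "a \<in> ?B"
    then have "norm (G p a * prime_monomial K s p a) \<le> C * real p powr - \<delta>"
      using G_bound[OF p] by blast
    also have "\<dots> \<le> \<bar>C\<bar> * real p powr - \<delta>"
      by (intro mult_right_mono) auto
    finally show "norm (G p a * prime_monomial K s p a) \<le> \<bar>C\<bar> * real p powr - \<delta>" .
  qed
  also have "\<dots> \<le> card (exp_box K D) * (\<bar>C\<bar> * real p powr - \<delta>)"
    using finite_K by (simp del: of_nat_diff) (intro mult_right_mono card_mono, auto)
  finally show ?thesis
    by (simp add: mult.assoc)
qed

lemma sum_norm_smooth_tuples_le: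
  "(\<Sum>n\<in>smooth_tuples K D N. norm (mult_fun K G n / tuple_powr K n s))
     \<le> exp (card (exp_box K D) * \<bar>C\<bar> * (\<Sum>n. real n powr - \<delta>))"
proof -
  define M where "M = card (exp_box K D) * \<bar>C\<bar>"
  have M: "M \<ge> 0" unfolding M_def by simp
  have "(\<Sum>n\<in>smooth_tuples K D N. norm (mult_fun K G n / tuple_powr K n s))
      \<le> (\<Prod>p\<in>primes_le N. 1 + M * real p powr - \<delta>)"
    unfolding sum_norm_smooth_tuples M_def
    by (intro prod_mono conjI sum_nonneg euler_factor_norm_le norm_ge_zero)
      (auto dest: prime_of_primes_le)
  also have "\<dots> \<le> exp (\<Sum>p\<in>primes_le N. M * real p powr - \<delta>)"
    using M by (intro prod_le_exp_sum) auto
  also have "\<dots> \<le> exp (M * (\<Sum>n. real n powr - \<delta>))"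
  proof -
    have "summable (\<lambda>n::nat. real n powr - \<delta>)"
      using exponent_gt_1 by (simp add: summable_real_powr_iff)
    then have "(\<Sum>p\<in>primes_le N. real p powr - \<delta>) \<le> (\<Sum>n. real n powr - \<delta>)"
      by (intro sum_le_suminf) auto
    then show ?thesis
      using M by (simp add: sum_distrib_left[symmetric] mult_left_mono)
  qed
  finally show ?thesis
    unfolding M_def .
qed

lemma abs_summable:
  "(\<lambda>n. norm (mult_fun K G n / tuple_powr K n s)) summable_on pos_tuples K"
proof (rule nonneg_bdd_above_summable_on)
  let ?f = "\<lambda>n. norm (mult_fun K G n / tuple_powr K n s)"
  let ?B = "exp (card (exp_box K D) * \<bar>C\<bar> * (\<Sum>n. real n powr - \<delta>))"
  have "sum ?f F \<le> ?B" if F: "F \<subseteq> pos_tuples K" "finite F" for F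
  proof -
    let ?F' = "{n\<in>F. ?f n \<noteq> 0}"
    have "eventually (\<lambda>N. ?F' \<subseteq> smooth_tuples K D N) sequentially"
      using F by (intro eventually_subset_smooth_tuples) auto
    then obtain N where N: "?F' \<subseteq> smooth_tuples K D N"
      by (auto simp: eventually_sequentially)
    have "sum ?f F = sum ?f ?F'"
      using F by (intro sum.mono_neutral_right) auto
    also have "\<dots> \<le> sum ?f (smooth_tuples K D N)"
      using N finite_smooth_tuples[OF finite_K] by (intro sum_mono2) auto
    also have "\<dots> \<le> ?B"
      by (rule sum_norm_smooth_tuples_le)
    finally show ?thesis .
  qed
  then show "bdd_above (sum ?f ` {F. F \<subseteq> pos_tuples K \<and> finite F})"
    by (intro bdd_aboveI[where M = ?B]) auto
qed auto

lemma euler_product_tendsto: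
  "(\<lambda>N. \<Prod>p\<in>primes_le N. \<Sum>a\<in>exp_box K D. G p a * prime_monomial K s p a)
     \<longlonglongrightarrow> (\<Sum>\<^sub>\<infinity>n\<in>pos_tuples K. mult_fun K G n / tuple_powr K n s)"
proof -
  define f where "f n = mult_fun K G n / tuple_powr K n s" for n
  define S where "S = {n\<in>pos_tuples K. f n \<noteq> 0}"
  have "f summable_on pos_tuples K"
    using abs_summable unfolding f_def by (rule abs_summable_summable)
  then have "(f has_sum infsum f (pos_tuples K)) S"
    by (subst has_sum_cong_neutral[where g = f and T = "pos_tuples K"]) (auto simp: S_def)
  then have lim: "(sum f \<longlongrightarrow> infsum f (pos_tuples K)) (finite_subsets_at_top S)"
    by (simp add: has_sum_def)
  have "filterlim (\<lambda>N. smooth_tuples K D N \<inter> S) (finite_subsets_at_top S) sequentially"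
    unfolding filterlim_finite_subsets_at_top
  proof (intro allI impI)
    fix X assume X: "finite X \<and> X \<subseteq> S"
    then have "eventually (\<lambda>N. X \<subseteq> smooth_tuples K D N) sequentially"
      by (intro eventually_subset_smooth_tuples) (auto simp: S_def f_def)
    then show "eventually (\<lambda>N. finite (smooth_tuples K D N \<inter> S) \<and> X \<subseteq> smooth_tuples K D N \<inter> S
        \<and> smooth_tuples K D N \<inter> S \<subseteq> S) sequentially"
      using X finite_smooth_tuples[OF finite_K] by (auto elim: eventually_mono)
  qed
  from filterlim_compose[OF lim this]
  have "(\<lambda>N. sum f (smooth_tuples K D N \<inter> S)) \<longlonglongrightarrow> infsum f (pos_tuples K)" .
  moreover have "sum f (smooth_tuples K D N \<inter> S) = sum f (smooth_tuples K D N)" for N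
    using finite_smooth_tuples[OF finite_K] smooth_tuples_subset[of K D N]
    by (intro sum.mono_neutral_left) (auto simp: S_def)
  ultimately show ?thesis
    unfolding f_def sum_smooth_tuples by simp
qed

end

section \<open>The Euler product of the zeta function\<close>

definition rough_numbers :: "nat \<Rightarrow> nat set" where
  "rough_numbers N = {n. 1 \<le> n \<and> (\<forall>p. prime p \<longrightarrow> p dvd n \<longrightarrow> N < p)}"

lemma rough_numbers_0: "rough_numbers 0 = {1..}"
  by (auto simp: rough_numbers_def prime_gt_0_nat)

lemma one_in_rough_numbers: "1 \<in> rough_numbers N"
  by (auto simp: rough_numbers_def dest: prime_gt_1_nat)

lemma rough_numbers_minus_one_subset: "rough_numbers N - {1} \<subseteq> {N<..}"
proof
  fix n assume n: "n \<in> rough_numbers N - {1}"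
  then obtain p where "prime p" "p dvd n"
    using prime_factor_nat[of n] by (auto simp: rough_numbers_def)
  moreover have "1 \<le> n" "\<forall>p. prime p \<longrightarrow> p dvd n \<longrightarrow> N < p"
    using n by (simp_all add: rough_numbers_def)
  ultimately have "N < p" "p \<le> n"
    using dvd_imp_le[of p n] by auto
  then show "n \<in> {N<..}"
    by simp
qed

lemma rough_numbers_Suc_not_prime:
  assumes "\<not> prime (Suc N)"
  shows "rough_numbers (Suc N) = rough_numbers N"
proof -
  have "Suc N < p \<longleftrightarrow> N < p" if "prime p" for p
    using assms that by (cases "p = Suc N") auto
  then show ?thesis
    unfolding rough_numbers_def by (auto simp only:)
qed

lemma image_mult_rough_numbers:
  assumes q: "prime q" "N < q"
  shows "(\<lambda>m. q * m) ` rough_numbers N = {n \<in> rough_numbers N. q dvd n}"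
proof (intro set_eqI iffI)
  fix n assume "n \<in> (\<lambda>m. q * m) ` rough_numbers N"
  then obtain m where m: "m \<in> rough_numbers N" "n = q * m" by blast
  have "N < p" if "prime p" "p dvd q * m" for p
    using that m q prime_dvd_mult_iff[of p q m] primes_dvd_imp_eq[of p q]
    by (auto simp: rough_numbers_def)
  moreover have "1 \<le> q * m"
    using m(1) prime_gt_0_nat[OF q(1)] by (simp add: rough_numbers_def)
  ultimately show "n \<in> {n \<in> rough_numbers N. q dvd n}"
    using m(2) by (simp add: rough_numbers_def)
next
  fix n assume n: "n \<in> {n \<in> rough_numbers N. q dvd n}"
  then obtain m where m: "n = q * m" by blast
  then have "m \<in> rough_numbers N"
    using n by (auto simp: rough_numbers_def Suc_le_eq)
  then show "n \<in> (\<lambda>m. q * m) ` rough_numbers N"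
    using m by blast
qed

lemma rough_numbers_Suc_prime:
  assumes "prime (Suc N)"
  shows "rough_numbers (Suc N) = {n \<in> rough_numbers N. \<not> Suc N dvd n}"
proof -
  have "Suc N < p \<longleftrightarrow> N < p \<and> p \<noteq> Suc N" for p
    by auto
  then show ?thesis
    using assms unfolding rough_numbers_def by (auto simp only:)
qed

lemma norm_inverse_of_nat_powr: "norm (inverse (of_nat n powr t :: complex)) = real n powr - Re t"
  by (cases "n = 0") (simp_all add: norm_inverse norm_powr_real_powr powr_minus)

lemma inverse_of_nat_powr_abs_summable_on:
  assumes "1 < Re t"
  shows "(\<lambda>n. norm (inverse (of_nat n powr t :: complex))) summable_on A"
proof -
  have "summable (\<lambda>n. real n powr - Re t)"
    using assms by (simp add: summable_real_powr_iff)
  then have "(\<lambda>n. real n powr - Re t) summable_on UNIV"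
    by (simp add: summable_on_UNIV_nonneg_real_iff)
  then show ?thesis
    unfolding norm_inverse_of_nat_powr by (rule summable_on_subset_banach) simp
qed

lemma tendsto_infsum_greaterThan:
  fixes g :: "nat \<Rightarrow> real"
  assumes g: "g summable_on UNIV"
  shows "(\<lambda>N. infsum g {N<..}) \<longlonglongrightarrow> 0"
proof -
  have "(sum g \<longlongrightarrow> infsum g UNIV) (finite_subsets_at_top UNIV)"
    using has_sum_infsum[OF g] by (simp add: has_sum_def)
  moreover have "filterlim (\<lambda>N. {..N}) (finite_subsets_at_top UNIV) sequentially"
    unfolding filterlim_finite_subsets_at_top eventually_sequentially
  proof (intro allI impI)
    fix X :: "nat set" assume "finite X \<and> X \<subseteq> UNIV"
    then obtain m where "X \<subseteq> {..m}"
      using finite_nat_iff_bounded_le by auto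
    then show "\<exists>N. \<forall>n\<ge>N. finite {..n} \<and> X \<subseteq> {..n} \<and> {..n} \<subseteq> UNIV"
      by (intro exI[of _ m]) auto
  qed
  ultimately have "(\<lambda>N. sum g {..N}) \<longlonglongrightarrow> infsum g UNIV"
    by (rule filterlim_compose)
  then have "(\<lambda>N. infsum g UNIV - sum g {..N}) \<longlonglongrightarrow> infsum g UNIV - infsum g UNIV"
    by (intro tendsto_diff tendsto_const)
  moreover have "infsum g {N<..} = infsum g UNIV - sum g {..N}" for N
  proof -
    have "infsum g UNIV = infsum g ({..N} \<union> {N<..})"
      by (rule arg_cong[where f = "infsum g"]) auto
    also have "\<dots> = sum g {..N} + infsum g {N<..}"
      using g by (subst infsum_Un_disjoint) (auto intro: summable_on_subset_banach)
    finally show ?thesis by simp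
  qed
  ultimately show ?thesis
    by simp
qed

lemma infsum_image_mult_inverse_of_nat_powr:
  fixes t :: complex
  assumes t: "1 < Re t" and q: "0 < q"
  shows "inverse (of_nat q powr t) * (\<Sum>\<^sub>\<infinity>n\<in>A. inverse (of_nat n powr t))
           = (\<Sum>\<^sub>\<infinity>n\<in>(\<lambda>m. q * m) ` A. inverse (of_nat n powr t))"
proof -
  have "inverse (of_nat q powr t) * (\<Sum>\<^sub>\<infinity>n\<in>A. inverse (of_nat n powr t))
      = (\<Sum>\<^sub>\<infinity>n\<in>A. inverse (of_nat q powr t) * inverse (of_nat n powr t))"
    by (rule infsum_cmult_right[symmetric])
      (rule abs_summable_summable[OF inverse_of_nat_powr_abs_summable_on[OF t]])
  also have "\<dots> = (\<Sum>\<^sub>\<infinity>n\<in>A. inverse (of_nat (q * n) powr t))"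
    by (simp add: of_nat_mult_powr del: of_nat_mult)
  also have "\<dots> = (\<Sum>\<^sub>\<infinity>n\<in>(\<lambda>m. q * m) ` A. inverse (of_nat n powr t))"
    using q by (subst infsum_reindex) (auto intro: inj_onI simp: o_def)
  finally show ?thesis .
qed

lemma zeta_mult_partial_euler_product:
  fixes t :: complex
  assumes t: "1 < Re t"
  shows "zeta t * (\<Prod>p\<in>primes_le N. 1 - inverse (of_nat p powr t))
           = (\<Sum>\<^sub>\<infinity>n\<in>rough_numbers N. inverse (of_nat n powr t))"
proof (induction N)
  case 0
  have "primes_le 0 = {}"
    by (auto simp: primes_le_def)
  then show ?case
    by (simp add: zeta_def rough_numbers_0 divide_inverse)
next
  case (Suc N)
  define h where "h n = inverse (of_nat n powr t :: complex)" for n :: nat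
  have h_summable: "h summable_on A" for A
    unfolding h_def by (rule abs_summable_summable[OF inverse_of_nat_powr_abs_summable_on[OF t]])
  show ?case
  proof (cases "prime (Suc N)")
    case False
    then have "primes_le (Suc N) = primes_le N"
      by (auto simp: primes_le_def le_Suc_eq)
    then show ?thesis
      using Suc.IH False by (simp add: rough_numbers_Suc_not_prime)
  next
    case True
    define q where "q = Suc N"
    have primes: "primes_le (Suc N) = insert q (primes_le N)" "q \<notin> primes_le N"
      using True by (auto simp: primes_le_def q_def le_Suc_eq)
    have mult_q: "(\<lambda>m. q * m) ` rough_numbers N = {n \<in> rough_numbers N. q dvd n}"
      using True by (intro image_mult_rough_numbers) (simp_all add: q_def)
    have multiples: "h q * infsum h (rough_numbers N) = infsum h ((\<lambda>m. q * m) ` rough_numbers N)"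
      unfolding h_def using True
      by (intro infsum_image_mult_inverse_of_nat_powr[OF t]) (simp add: q_def)
    have "zeta t * (\<Prod>p\<in>primes_le (Suc N). 1 - h p)
        = (1 - h q) * (zeta t * (\<Prod>p\<in>primes_le N. 1 - h p))"
      using primes by (simp add: mult_ac)
    also have "\<dots> = infsum h (rough_numbers N) - infsum h ((\<lambda>m. q * m) ` rough_numbers N)"
      using Suc.IH multiples unfolding h_def by (simp add: algebra_simps)
    also have "\<dots> = infsum h (rough_numbers N - (\<lambda>m. q * m) ` rough_numbers N)"
      by (rule infsum_Diff[symmetric]) (auto intro: h_summable simp: mult_q)
    also have "rough_numbers N - (\<lambda>m. q * m) ` rough_numbers N = rough_numbers (Suc N)"
      unfolding mult_q using True by (auto simp: rough_numbers_Suc_prime q_def)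
    finally show ?thesis
      unfolding h_def .
  qed
qed

lemma zeta_mult_partial_euler_product_tendsto:
  fixes t :: complex
  assumes t: "1 < Re t"
  shows "(\<lambda>N. zeta t * (\<Prod>p\<in>primes_le N. 1 - inverse (of_nat p powr t))) \<longlonglongrightarrow> 1"
proof -
  define h where "h n = inverse (of_nat n powr t :: complex)" for n :: nat
  have norm_h_summable: "(\<lambda>n. norm (h n)) summable_on A" for A
    unfolding h_def by (rule inverse_of_nat_powr_abs_summable_on[OF t])
  have h_summable: "h summable_on A" for A
    by (rule abs_summable_summable[OF norm_h_summable])
  have bound: "norm (infsum h (rough_numbers N) - 1) \<le> (\<Sum>\<^sub>\<infinity>n\<in>{N<..}. norm (h n))" for N
  proof -
    have "infsum h (rough_numbers N) = infsum h ((rough_numbers N - {1}) \<union> {1})"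
      by (rule arg_cong[where f = "infsum h"]) (use one_in_rough_numbers[of N] in blast)
    also have "\<dots> = infsum h (rough_numbers N - {1}) + infsum h {1}"
      by (rule infsum_Un_disjoint[OF h_summable h_summable]) simp
    finally have "infsum h (rough_numbers N) = infsum h (rough_numbers N - {1}) + infsum h {1}" .
    then have "norm (infsum h (rough_numbers N) - 1) = norm (infsum h (rough_numbers N - {1}))"
      by (simp add: h_def)
    also have "\<dots> \<le> (\<Sum>\<^sub>\<infinity>n\<in>rough_numbers N - {1}. norm (h n))"
      by (rule norm_infsum_bound[OF norm_h_summable])
    also have "\<dots> \<le> (\<Sum>\<^sub>\<infinity>n\<in>{N<..}. norm (h n))"
      using rough_numbers_minus_one_subset by (intro infsum_mono2 norm_h_summable) auto
    finally show ?thesis .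
  qed
  have "(\<lambda>N. infsum h (rough_numbers N) - 1) \<longlonglongrightarrow> 0"
    by (rule Lim_null_comparison[OF always_eventually[OF allI[OF bound]]
          tendsto_infsum_greaterThan[OF norm_h_summable]])
  then show ?thesis
    unfolding zeta_mult_partial_euler_product[OF t] h_def[abs_def] by (simp add: LIM_zero_iff)
qed

section \<open>The local factors of \<open>f\<close> and \<open>E\<close>\<close>

definition weight :: "nat set \<Rightarrow> (nat \<Rightarrow> nat) \<Rightarrow> nat" where
  "weight K a = (\<Sum>j\<in>K. a j)"

text \<open>The Euler factor of \<^const>\<open>fk\<close> at \<open>p\<close>: the Moebius factors force all exponents to be at
  most 1, the square condition forces an even total exponent, and \<open>p / (p + 1)\<close> occurs iff \<open>p\<close>
  divides the product.\<close>
definition f_factor :: "nat set \<Rightarrow> nat \<Rightarrow> (nat \<Rightarrow> nat) \<Rightarrow> complex" where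
  "f_factor K p a = (if (\<forall>j\<in>K. a j \<le> 1) \<and> even (weight K a)
     then (if weight K a = 0 then 1 else of_nat p / (of_nat p + 1)) else 0)"

lemma weight_zero_vec [simp]: "weight K (zero_vec K) = 0"
  unfolding weight_def zero_vec_def by simp

lemma weight_pos:
  assumes K: "finite K" and a: "a \<in> exp_box K D" "a \<noteq> zero_vec K"
  shows "1 \<le> weight K a"
proof (rule ccontr)
  assume "\<not> 1 \<le> weight K a"
  then have "weight K a = 0"
    by simp
  then have "\<forall>j\<in>K. a j = 0"
    using K by (simp add: weight_def)
  then have "a = zero_vec K"
    by (intro exp_box_eqI[OF a(1) zero_vec_in_exp_box]) (simp add: zero_vec_def)
  then show False
    using a(2) by simp
qed

lemma norm_prime_monomial_le:
  assumes p: "1 \<le> p" and K: "finite K" and s: "\<forall>j\<in>K. \<sigma> \<le> Re (s j)" and \<sigma>: "0 \<le> \<sigma>"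
    and m: "m \<le> weight K a"
  shows "norm (prime_monomial K s p a) \<le> real p powr (- \<sigma> * m)"
proof -
  have "norm (prime_monomial K s p a) = (\<Prod>j\<in>K. (real p powr - Re (s j)) ^ a j)"
    unfolding prime_monomial_def
    by (simp add: prod_norm[symmetric] norm_power norm_inverse_of_nat_powr)
  also have "\<dots> \<le> (\<Prod>j\<in>K. (real p powr - \<sigma>) ^ a j)"
    using s p by (intro prod_mono conjI power_mono powr_mono) auto
  also have "\<dots> = (real p powr - \<sigma>) ^ weight K a"
    by (simp add: weight_def power_sum)
  also have "\<dots> = real p powr (- \<sigma> * weight K a)"
    using p by (simp add: powr_realpow[symmetric] powr_powr)
  also have "\<dots> \<le> real p powr (- \<sigma> * m)"
    using p \<sigma> m by (intro powr_mono) (auto intro: mult_left_mono)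
  finally show ?thesis .
qed

lemma f_factor_zero_vec: "f_factor K p (zero_vec K) = 1"
  by (simp add: f_factor_def zero_vec_def weight_def)

lemma f_factor_nonzero_le_1: "f_factor K p a \<noteq> 0 \<Longrightarrow> j \<in> K \<Longrightarrow> a j \<le> 1"
  unfolding f_factor_def by (auto split: if_splits)

lemma f_factor_nonzero_even: "f_factor K p a \<noteq> 0 \<Longrightarrow> even (weight K a)"
  unfolding f_factor_def by (auto split: if_splits)

lemma norm_f_factor_le: "norm (f_factor K p a) \<le> 1"
proof -
  have "(of_nat p / (of_nat p + 1) :: complex) = of_real (real p / (real p + 1))"
    by simp
  then have "norm (of_nat p / (of_nat p + 1) :: complex) = real p / (real p + 1)"
    by (simp only: norm_of_real) simp
  then show ?thesis
    unfolding f_factor_def by auto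
qed

lemma norm_f_factor_monomial_le:
  assumes K: "finite K" and p: "prime p" and s: "\<forall>j\<in>K. \<sigma> \<le> Re (s j)" and \<sigma>: "0 \<le> \<sigma>"
    and a: "a \<in> exp_box K D" "a \<noteq> zero_vec K"
  shows "norm (f_factor K p a * prime_monomial K s p a) \<le> real p powr - (2 * \<sigma>)"
proof (cases "f_factor K p a = 0")
  case False
  then have "weight K a \<noteq> 1"
    using f_factor_nonzero_even by fastforce
  then have "2 \<le> weight K a"
    using weight_pos[OF K a] by linarith
  then have "norm (prime_monomial K s p a) \<le> real p powr (- \<sigma> * 2)"
    using norm_prime_monomial_le[OF prime_ge_1_nat[OF p] K s \<sigma>, where m = 2] by simp
  then have "norm (f_factor K p a) * norm (prime_monomial K s p a) \<le> 1 * real p powr (- \<sigma> * 2)"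
    by (intro mult_mono norm_f_factor_le) auto
  then show ?thesis
    by (simp add: norm_mult mult.commute)
qed simp

definition pairs :: "nat set \<Rightarrow> nat set set" where
  "pairs K = {I. I \<subseteq> K \<and> card I = 2}"

definition indicator_vec :: "nat set \<Rightarrow> nat set \<Rightarrow> nat \<Rightarrow> nat" where
  "indicator_vec K I = restrict (\<lambda>j. if j \<in> I then 1 else 0) K"

definition degree_vec :: "nat set \<Rightarrow> nat set set \<Rightarrow> nat \<Rightarrow> nat" where
  "degree_vec K T = restrict (\<lambda>j. card {I\<in>T. j \<in> I}) K"

definition vec_add :: "nat set \<Rightarrow> (nat \<Rightarrow> nat) \<Rightarrow> (nat \<Rightarrow> nat) \<Rightarrow> nat \<Rightarrow> nat" where
  "vec_add K b c = restrict (\<lambda>j. b j + c j) K"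

definition vec_diff :: "nat set \<Rightarrow> (nat \<Rightarrow> nat) \<Rightarrow> (nat \<Rightarrow> nat) \<Rightarrow> nat \<Rightarrow> nat" where
  "vec_diff K a c = restrict (\<lambda>j. a j - c j) K"

text \<open>Expanding \<open>\<Prod>_{I \<in> pairs K} (1 - p^(-s_I))\<close> over the sets \<open>T\<close> of pairs, \<open>T\<close> contributes
  \<open>(-1)^|T|\<close> times the monomial with exponent vector \<open>degree_vec K T\<close>. Hence \<open>e_factor K p a\<close> is
  the coefficient of \<open>prime_monomial K s p a\<close> in the product of this polynomial with the Euler
  factor of \<^const>\<open>fk\<close>.\<close>
definition e_term :: "nat set \<Rightarrow> nat \<Rightarrow> (nat \<Rightarrow> nat) \<Rightarrow> nat set set \<Rightarrow> complex" where
  "e_term K p a T = (if \<forall>j\<in>K. degree_vec K T j \<le> a j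
     then f_factor K p (vec_diff K a (degree_vec K T)) else 0)"

definition e_factor :: "nat set \<Rightarrow> nat \<Rightarrow> (nat \<Rightarrow> nat) \<Rightarrow> complex" where
  "e_factor K p a = (\<Sum>T\<in>Pow (pairs K). (-1) ^ card T * e_term K p a T)"

definition e_degree_bound :: "nat set \<Rightarrow> nat" where
  "e_degree_bound K = 1 + card (pairs K)"

lemma finite_pairs: "finite K \<Longrightarrow> finite (pairs K)"
  unfolding pairs_def by (rule finite_subset[of _ "Pow K"]) auto

lemma finite_subset_pairs: "finite K \<Longrightarrow> T \<subseteq> pairs K \<Longrightarrow> finite T"
  using finite_pairs finite_subset by blast

lemma indicator_vec_in_exp_box: "indicator_vec K I \<in> exp_box K 1"
  unfolding indicator_vec_def exp_box_def by auto

lemma weight_indicator_vec: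
  assumes K: "finite K" and I: "I \<subseteq> K"
  shows "weight K (indicator_vec K I) = card I"
proof -
  have "weight K (indicator_vec K I) = card (K \<inter> I)"
    using K by (simp add: weight_def indicator_vec_def sum.If_cases)
  then show ?thesis
    using I by (simp add: Int_absorb1)
qed

lemma degree_vec_empty: "degree_vec K {} = zero_vec K"
  unfolding degree_vec_def zero_vec_def by simp

lemma degree_vec_singleton: "degree_vec K {I} = indicator_vec K I"
proof -
  have "{I' \<in> {I}. j \<in> I'} = (if j \<in> I then {I} else {})" for j
    by auto
  then show ?thesis
    unfolding degree_vec_def indicator_vec_def by (intro ext) auto
qed

lemma degree_vec_le_card_pairs:
  assumes K: "finite K" and T: "T \<subseteq> pairs K" and j: "j \<in> K"
  shows "degree_vec K T j \<le> card (pairs K)"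
proof -
  have "degree_vec K T j \<le> card T"
    using finite_subset_pairs[OF K T] j by (auto simp: degree_vec_def intro: card_mono)
  also have "\<dots> \<le> card (pairs K)"
    using finite_pairs[OF K] T by (rule card_mono)
  finally show ?thesis .
qed

lemma weight_degree_vec:
  assumes K: "finite K" and T: "T \<subseteq> pairs K"
  shows "weight K (degree_vec K T) = 2 * card T"
proof -
  have "weight K (degree_vec K T) = (\<Sum>j\<in>K. \<Sum>I\<in>T. if j \<in> I then 1 else 0 :: nat)"
    unfolding weight_def degree_vec_def
    using finite_subset_pairs[OF K T] by (intro sum.cong refl) (simp add: sum.If_cases Int_def)
  also have "\<dots> = (\<Sum>I\<in>T. \<Sum>j\<in>K. if j \<in> I then 1 else 0 :: nat)"
    by (rule sum.swap)
  also have "\<dots> = (\<Sum>I\<in>T. weight K (indicator_vec K I))"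
    by (simp add: weight_def indicator_vec_def)
  also have "\<dots> = (\<Sum>I\<in>T. 2)"
    using K T by (intro sum.cong refl) (auto simp: weight_indicator_vec pairs_def)
  finally show ?thesis
    by simp
qed

lemma weight_vec_diff:
  assumes "\<forall>j\<in>K. c j \<le> a j"
  shows "weight K (vec_diff K a c) = weight K a - weight K c"
  unfolding weight_def vec_diff_def using assms by (simp add: sum_subtractf_nat)

lemma e_term_nonzeroD:
  assumes K: "finite K" and T: "T \<subseteq> pairs K" and nz: "e_term K p a T \<noteq> 0"
  shows "\<forall>j\<in>K. degree_vec K T j \<le> a j" "f_factor K p (vec_diff K a (degree_vec K T)) \<noteq> 0"
    "weight K (vec_diff K a (degree_vec K T)) = weight K a - 2 * card T" "2 * card T \<le> weight K a"
proof -
  show le_a: "\<forall>j\<in>K. degree_vec K T j \<le> a j" and "f_factor K p (vec_diff K a (degree_vec K T)) \<noteq> 0"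
    using nz unfolding e_term_def by (auto split: if_splits)
  have "weight K (degree_vec K T) \<le> weight K a"
    using le_a unfolding weight_def by (intro sum_mono) auto
  then show "weight K (vec_diff K a (degree_vec K T)) = weight K a - 2 * card T"
    "2 * card T \<le> weight K a"
    using weight_vec_diff[OF le_a] weight_degree_vec[OF K T] by simp_all
qed

lemma e_term_empty:
  assumes a: "a \<in> exp_box K D"
  shows "e_term K p a {} = f_factor K p a"
proof -
  have "vec_diff K a (zero_vec K) = restrict a K"
    unfolding vec_diff_def zero_vec_def by (rule restrict_ext) simp
  then show ?thesis
    by (simp add: e_term_def degree_vec_empty zero_vec_def restrict_exp_box[OF a])
qed

lemma e_factor_zero_vec:
  assumes K: "finite K"
  shows "e_factor K p (zero_vec K) = 1"
proof -
  have "e_term K p (zero_vec K) T = 0" if T: "T \<in> Pow (pairs K) - {{}}" for T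
  proof (rule ccontr)
    assume "e_term K p (zero_vec K) T \<noteq> 0"
    then have "2 * card T \<le> weight K (zero_vec K)"
      using T by (intro e_term_nonzeroD(4)[OF K]) auto
    then show False
      using T finite_subset_pairs[OF K, of T] by auto
  qed
  then have "e_factor K p (zero_vec K) = e_term K p (zero_vec K) {}"
    unfolding e_factor_def using finite_pairs[OF K] by (subst sum.remove[of _ "{}"]) auto
  then show ?thesis
    by (simp add: e_term_empty[OF zero_vec_in_exp_box] f_factor_zero_vec)
qed

lemma e_factor_support:
  assumes K: "finite K" and nz: "e_factor K p a \<noteq> 0" and j: "j \<in> K"
  shows "a j \<le> e_degree_bound K"
proof -
  obtain T where T: "T \<subseteq> pairs K" and nz_T: "e_term K p a T \<noteq> 0"
    using sum.not_neutral_contains_not_neutral[OF nz[unfolded e_factor_def]] by auto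
  have "degree_vec K T j \<le> a j" "vec_diff K a (degree_vec K T) j \<le> 1"
    using e_term_nonzeroD(1,2)[OF K T nz_T] f_factor_nonzero_le_1 j by simp_all
  then show ?thesis
    using degree_vec_le_card_pairs[OF K T j] j by (simp add: vec_diff_def e_degree_bound_def)
qed

lemma prime_monomial_vec_add:
  "prime_monomial K s p (vec_add K b c) = prime_monomial K s p b * prime_monomial K s p c"
  unfolding prime_monomial_def vec_add_def by (simp add: power_add prod.distrib)

lemma prime_monomial_indicator_vec:
  assumes K: "finite K" and I: "I \<subseteq> K" and p: "0 < p"
  shows "prime_monomial K s p (indicator_vec K I) = inverse (of_nat p powr (\<Sum>j\<in>I. s j))"
proof -
  have "prime_monomial K s p (indicator_vec K I)
      = (\<Prod>j\<in>K. if j \<in> I then inverse (of_nat p powr s j) else 1)"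
    unfolding prime_monomial_def indicator_vec_def by (intro prod.cong) auto
  also have "\<dots> = (\<Prod>j\<in>K \<inter> I. inverse (of_nat p powr s j))"
    using K by (simp add: prod.If_cases)
  also have "\<dots> = inverse (\<Prod>j\<in>I. of_nat p powr s j)"
    using I by (simp add: Int_absorb1 prod_inversef[symmetric] o_def)
  also have "\<dots> = inverse (of_nat p powr (\<Sum>j\<in>I. s j))"
    using p by (simp add: powr_sum)
  finally show ?thesis .
qed

lemma prime_monomial_degree_vec:
  assumes K: "finite K" and T: "T \<subseteq> pairs K"
  shows "prime_monomial K s p (degree_vec K T) = (\<Prod>I\<in>T. prime_monomial K s p (indicator_vec K I))"
proof -
  have "prime_monomial K s p (degree_vec K T)
      = (\<Prod>j\<in>K. \<Prod>I\<in>T. inverse (of_nat p powr s j) ^ (if j \<in> I then 1 else 0))"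
    unfolding prime_monomial_def degree_vec_def using finite_subset_pairs[OF K T]
    by (intro prod.cong refl) (simp add: sum.If_cases Int_def flip: power_sum)
  also have "\<dots> = (\<Prod>I\<in>T. prime_monomial K s p (indicator_vec K I))"
    unfolding prime_monomial_def indicator_vec_def by (subst prod.swap) (intro prod.cong refl, auto)
  finally show ?thesis .
qed

lemma prod_pairs_one_minus_eq_sum:
  assumes K: "finite K" and p: "0 < p"
  shows "(\<Prod>I\<in>pairs K. 1 - inverse (of_nat p powr (\<Sum>j\<in>I. s j)))
           = (\<Sum>T\<in>Pow (pairs K). (-1) ^ card T * prime_monomial K s p (degree_vec K T))"
proof -
  have "(\<Prod>I\<in>pairs K. 1 - inverse (of_nat p powr (\<Sum>j\<in>I. s j)))
      = (\<Prod>I\<in>pairs K. - prime_monomial K s p (indicator_vec K I) + 1)"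
    using prime_monomial_indicator_vec[OF K _ p] by (intro prod.cong) (auto simp: pairs_def)
  also have "\<dots> = (\<Sum>T\<in>Pow (pairs K). (\<Prod>I\<in>T. - prime_monomial K s p (indicator_vec K I))
                    * (\<Prod>I\<in>pairs K - T. 1))"
    by (rule prod_add[OF finite_pairs[OF K]])
  also have "\<dots> = (\<Sum>T\<in>Pow (pairs K). (-1) ^ card T * prime_monomial K s p (degree_vec K T))"
    using prime_monomial_degree_vec[OF K] by (intro sum.cong refl) (simp add: prod_uminus)
  finally show ?thesis .
qed

lemma e_term_vec_add_degree_vec:
  assumes b: "b \<in> exp_box K 1"
  shows "e_term K p (vec_add K b (degree_vec K T)) T = f_factor K p b"
proof -
  have "vec_diff K (vec_add K b (degree_vec K T)) (degree_vec K T) = restrict b K"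
    unfolding vec_diff_def vec_add_def by (rule restrict_ext) simp
  then show ?thesis
    by (simp add: e_term_def vec_add_def restrict_exp_box[OF b])
qed

lemma e_term_nonzero_in_image_vec_add:
  assumes K: "finite K" and T: "T \<subseteq> pairs K" and a: "a \<in> exp_box K D"
    and nz: "e_term K p a T \<noteq> 0"
  shows "a \<in> (\<lambda>b. vec_add K b (degree_vec K T)) ` exp_box K 1"
proof
  show "vec_diff K a (degree_vec K T) \<in> exp_box K 1"
    using f_factor_nonzero_le_1[OF e_term_nonzeroD(2)[OF K T nz]]
    by (auto simp: exp_box_def vec_diff_def)
  show "a = vec_add K (vec_diff K a (degree_vec K T)) (degree_vec K T)"
  proof (rule ext)
    fix j
    show "a j = vec_add K (vec_diff K a (degree_vec K T)) (degree_vec K T) j"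
      using e_term_nonzeroD(1)[OF K T nz] PiE_arb[OF a[unfolded exp_box_def], of j]
      by (cases "j \<in> K") (auto simp: vec_add_def vec_diff_def)
  qed
qed

lemma vec_add_degree_vec_in_exp_box:
  assumes K: "finite K" and T: "T \<subseteq> pairs K" and b: "b \<in> exp_box K 1"
  shows "vec_add K b (degree_vec K T) \<in> exp_box K (e_degree_bound K)"
proof -
  have "b j + degree_vec K T j \<le> e_degree_bound K" if "j \<in> K" for j
    using PiE_mem[OF b[unfolded exp_box_def] that] degree_vec_le_card_pairs[OF K T that]
    by (simp add: e_degree_bound_def)
  then show ?thesis
    by (simp add: vec_add_def exp_box_def)
qed

lemma inj_on_vec_add: "inj_on (\<lambda>b. vec_add K b c) (exp_box K D)"
proof (rule inj_onI)
  fix b b' assume b: "b \<in> exp_box K D" and b': "b' \<in> exp_box K D"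
    and eq: "vec_add K b c = vec_add K b' c"
  show "b = b'"
  proof (rule exp_box_eqI[OF b b'])
    fix j assume "j \<in> K"
    then show "b j = b' j"
      using fun_cong[OF eq, of j] by (simp add: vec_add_def)
  qed
qed

lemma sum_e_term_eq:
  assumes K: "finite K" and T: "T \<subseteq> pairs K"
  shows "(\<Sum>a\<in>exp_box K (e_degree_bound K). e_term K p a T * prime_monomial K s p a)
       = (\<Sum>b\<in>exp_box K 1. f_factor K p b * prime_monomial K s p b)
         * prime_monomial K s p (degree_vec K T)"
proof -
  let ?shift = "\<lambda>b. vec_add K b (degree_vec K T)"
  have "(\<Sum>a\<in>exp_box K (e_degree_bound K). e_term K p a T * prime_monomial K s p a)
      = (\<Sum>a\<in>?shift ` exp_box K 1. e_term K p a T * prime_monomial K s p a)"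
    using K vec_add_degree_vec_in_exp_box[OF K T] e_term_nonzero_in_image_vec_add[OF K T]
    by (intro sum.mono_neutral_right) auto
  also have "\<dots> = (\<Sum>b\<in>exp_box K 1. e_term K p (?shift b) T * prime_monomial K s p (?shift b))"
    using inj_on_vec_add by (simp add: sum.reindex)
  also have "\<dots> = (\<Sum>b\<in>exp_box K 1.
      f_factor K p b * prime_monomial K s p b * prime_monomial K s p (degree_vec K T))"
    by (intro sum.cong refl) (simp add: e_term_vec_add_degree_vec prime_monomial_vec_add mult.assoc)
  finally show ?thesis
    by (simp add: sum_distrib_right)
qed

lemma e_euler_factor_eq:
  assumes K: "finite K" and p: "0 < p"
  shows "(\<Sum>a\<in>exp_box K (e_degree_bound K). e_factor K p a * prime_monomial K s p a)
       = (\<Sum>b\<in>exp_box K 1. f_factor K p b * prime_monomial K s p b)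
         * (\<Prod>I\<in>pairs K. 1 - inverse (of_nat p powr (\<Sum>j\<in>I. s j)))"
proof -
  have "(\<Sum>a\<in>exp_box K (e_degree_bound K). e_factor K p a * prime_monomial K s p a)
      = (\<Sum>T\<in>Pow (pairs K). (-1) ^ card T *
           (\<Sum>a\<in>exp_box K (e_degree_bound K). e_term K p a T * prime_monomial K s p a))"
    unfolding e_factor_def
    by (simp add: sum_distrib_left sum_distrib_right mult.assoc sum.swap[of _ "Pow _"])
  also have "\<dots> = (\<Sum>b\<in>exp_box K 1. f_factor K p b * prime_monomial K s p b)
      * (\<Sum>T\<in>Pow (pairs K). (-1) ^ card T * prime_monomial K s p (degree_vec K T))"
    by (simp add: sum_e_term_eq[OF K] sum_distrib_left mult.left_commute)
  also have "\<dots> = (\<Sum>b\<in>exp_box K 1. f_factor K p b * prime_monomial K s p b)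
      * (\<Prod>I\<in>pairs K. 1 - inverse (of_nat p powr (\<Sum>j\<in>I. s j)))"
    by (simp add: prod_pairs_one_minus_eq_sum[OF K p])
  finally show ?thesis .
qed

lemma zero_one_vec_eq_indicator_vec:
  assumes K: "finite K" and a: "a \<in> exp_box K D" and le_1: "\<forall>j\<in>K. a j \<le> 1"
  shows "a = indicator_vec K {j\<in>K. a j = 1}" and "card {j\<in>K. a j = 1} = weight K a"
proof -
  have "a j = indicator_vec K {j\<in>K. a j = 1} j" if "j \<in> K" for j
    using le_1 that by (auto simp: indicator_vec_def le_Suc_eq)
  then show "a = indicator_vec K {j\<in>K. a j = 1}"
    by (rule exp_box_eqI[OF a indicator_vec_in_exp_box])
  then show "card {j\<in>K. a j = 1} = weight K a"
    using weight_indicator_vec[OF K, of "{j\<in>K. a j = 1}"] by auto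
qed

lemma e_term_small_weightD:
  assumes K: "finite K" and a: "a \<in> exp_box K D" and w: "1 \<le> weight K a" "weight K a \<le> 3"
    and T: "T \<subseteq> pairs K" and nz: "e_term K p a T \<noteq> 0"
  shows "\<exists>I\<in>pairs K. a = indicator_vec K I \<and> T \<subseteq> {I}"
proof -
  let ?b = "vec_diff K a (degree_vec K T)"
  have b_nz: "f_factor K p ?b \<noteq> 0" and w_b: "weight K ?b = weight K a - 2 * card T"
    and le_a: "\<forall>j\<in>K. degree_vec K T j \<le> a j"
    using e_term_nonzeroD[OF K T nz] by auto
  have "card T \<le> 1"
    using e_term_nonzeroD(4)[OF K T nz] w by linarith
  then consider (empty) "T = {}" | (singleton) I where "T = {I}"
    using finite_subset_pairs[OF K T]
    by (metis card_0_eq card_1_singletonE le_Suc_eq One_nat_def le_zero_eq)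
  then show ?thesis
  proof cases
    case empty
    then have "f_factor K p a \<noteq> 0"
      using nz by (simp add: e_term_empty[OF a])
    then have "weight K a = 2" and le_1: "\<forall>j\<in>K. a j \<le> 1"
      using w f_factor_nonzero_even[of K p a] f_factor_nonzero_le_1[of K p a]
      by (auto simp: even_iff_mod_2_eq_zero)
    then have "{j\<in>K. a j = 1} \<in> pairs K"
      using zero_one_vec_eq_indicator_vec(2)[OF K a le_1] by (auto simp: pairs_def)
    then show ?thesis
      using zero_one_vec_eq_indicator_vec(1)[OF K a le_1] empty by blast
  next
    case (singleton I)
    have "even (weight K ?b)" "weight K ?b \<le> 1"
      using f_factor_nonzero_even[OF b_nz] w w_b singleton by auto
    then have "weight K ?b = 0"
      by (auto simp: le_Suc_eq)
    then have "a j = indicator_vec K I j" if "j \<in> K" for j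
      using le_a that K
      by (simp add: weight_def vec_diff_def singleton degree_vec_singleton) (meson order_antisym)
    then have "a = indicator_vec K I"
      by (rule exp_box_eqI[OF a indicator_vec_in_exp_box])
    then show ?thesis
      using T singleton by auto
  qed
qed

lemma indicator_vec_eq_iff:
  assumes "I \<subseteq> K" "I' \<subseteq> K"
  shows "indicator_vec K I = indicator_vec K I' \<longleftrightarrow> I = I'"
proof
  assume eq: "indicator_vec K I = indicator_vec K I'"
  have "j \<in> I \<longleftrightarrow> j \<in> I'" for j
    using fun_cong[OF eq, of j] assms
    by (cases "j \<in> K") (auto simp: indicator_vec_def split: if_splits)
  then show "I = I'"
    by blast
qed simp

lemma e_factor_indicator_vec_pair:
  assumes K: "finite K" and I: "I \<in> pairs K"
  shows "e_factor K p (indicator_vec K I) = - 1 / (of_nat p + 1)"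
proof -
  let ?a = "indicator_vec K I"
  have w: "weight K ?a = 2"
    using I K by (simp add: weight_indicator_vec pairs_def)
  have "e_term K p ?a T = 0" if T: "T \<in> Pow (pairs K) - {{}, {I}}" for T
  proof (rule ccontr)
    assume nz: "e_term K p ?a T \<noteq> 0"
    have "\<exists>I'\<in>pairs K. ?a = indicator_vec K I' \<and> T \<subseteq> {I'}"
      using T nz w by (intro e_term_small_weightD[OF K indicator_vec_in_exp_box]) auto
    then obtain I' where I': "I' \<in> pairs K" "?a = indicator_vec K I'" "T \<subseteq> {I'}"
      by blast
    then have "I' = I"
      using I indicator_vec_eq_iff[of I K I'] by (auto simp: pairs_def)
    then show False
      using T I' by (auto simp: subset_singleton_iff)
  qed
  then have "e_factor K p ?a = (\<Sum>T\<in>{{}, {I}}. (-1) ^ card T * e_term K p ?a T)"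
    unfolding e_factor_def using finite_pairs[OF K] I by (intro sum.mono_neutral_right) auto
  also have "\<dots> = e_term K p ?a {} - e_term K p ?a {I}"
    by simp
  also have "e_term K p ?a {} = of_nat p / (of_nat p + 1)"
    using w
    by (simp only: e_term_empty[OF indicator_vec_in_exp_box]) (simp add: f_factor_def indicator_vec_def)
  also have "e_term K p ?a {I} = 1"
  proof -
    have "vec_diff K ?a (indicator_vec K I) = zero_vec K"
      unfolding vec_diff_def zero_vec_def by (rule restrict_ext) simp
    then show ?thesis
      by (simp add: e_term_def degree_vec_singleton f_factor_zero_vec)
  qed
  also have "of_nat p / (of_nat p + 1) - 1 = (- 1 / (of_nat p + 1) :: complex)"
  proof -
    have "(of_nat p + 1 :: complex) \<noteq> 0"
      using of_nat_neq_0[of p] by (simp add: add.commute)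
    then show ?thesis
      by (simp add: field_simps)
  qed
  finally show ?thesis .
qed

lemma norm_e_factor_small_weight_le:
  assumes K: "finite K" and p: "0 < p" and a: "a \<in> exp_box K D"
    and w: "1 \<le> weight K a" "weight K a \<le> 3"
  shows "norm (e_factor K p a) \<le> 1 / real p"
proof (cases "\<exists>I\<in>pairs K. a = indicator_vec K I")
  case True
  then obtain I where "I \<in> pairs K" "a = indicator_vec K I"
    by blast
  moreover have "norm (of_nat p + 1 :: complex) = real p + 1"
    using norm_of_nat[of "Suc p"] by (simp add: add.commute)
  ultimately have "norm (e_factor K p a) = 1 / (real p + 1)"
    using e_factor_indicator_vec_pair[OF K] by (simp add: norm_divide)
  also have "\<dots> \<le> 1 / real p"
    using p by (simp add: frac_le)
  finally show ?thesis .
next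
  case False
  then have "e_term K p a T = 0" if "T \<in> Pow (pairs K)" for T
    using e_term_small_weightD[OF K a w] that by blast
  then show ?thesis
    by (simp add: e_factor_def)
qed

lemma norm_e_factor_le:
  assumes K: "finite K"
  shows "norm (e_factor K p a) \<le> 2 ^ card (pairs K)"
proof -
  have "norm (e_factor K p a) \<le> (\<Sum>T\<in>Pow (pairs K). norm ((-1) ^ card T * e_term K p a T))"
    unfolding e_factor_def by (rule norm_sum)
  also have "\<dots> \<le> (\<Sum>T\<in>Pow (pairs K). 1)"
    using norm_f_factor_le by (intro sum_mono) (simp add: e_term_def norm_mult norm_power)
  also have "\<dots> = 2 ^ card (pairs K)"
    using finite_pairs[OF K] by (simp add: card_Pow)
  finally show ?thesis .
qed

text \<open>The decisive estimate: the terms of weight 2 cancel against the zeta factors up to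
  \<open>1/(p+1)\<close>, so every nontrivial term is \<open>O(p^(-1-\<sigma>))\<close> or has weight at least 4.\<close>
lemma norm_e_factor_monomial_le:
  assumes K: "finite K" and p: "prime p" and s: "\<forall>j\<in>K. \<sigma> \<le> Re (s j)" and \<sigma>: "0 \<le> \<sigma>"
    and a: "a \<in> exp_box K D" "a \<noteq> zero_vec K"
  shows "norm (e_factor K p a * prime_monomial K s p a)
           \<le> 2 ^ card (pairs K) * real p powr - min (1 + \<sigma>) (4 * \<sigma>)"
proof -
  have p1: "1 \<le> p"
    using prime_gt_0_nat[OF p] by simp
  have mono: "real p powr - x \<le> 2 ^ card (pairs K) * real p powr - min (1 + \<sigma>) (4 * \<sigma>)"
    if "min (1 + \<sigma>) (4 * \<sigma>) \<le> x" for x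
  proof -
    have "real p powr - x \<le> 1 * real p powr - min (1 + \<sigma>) (4 * \<sigma>)"
      using that p1 by (simp add: powr_mono)
    also have "\<dots> \<le> 2 ^ card (pairs K) * real p powr - min (1 + \<sigma>) (4 * \<sigma>)"
      by (intro mult_right_mono) simp_all
    finally show ?thesis .
  qed
  show ?thesis
  proof (cases "4 \<le> weight K a")
    case True
    then have "norm (prime_monomial K s p a) \<le> real p powr (- \<sigma> * 4)"
      using norm_prime_monomial_le[OF p1 K s \<sigma>, where m = 4] by simp
    then have "norm (e_factor K p a) * norm (prime_monomial K s p a)
        \<le> 2 ^ card (pairs K) * real p powr - (4 * \<sigma>)"
      by (intro mult_mono norm_e_factor_le[OF K]) (auto simp: mult.commute)
    also have "\<dots> \<le> 2 ^ card (pairs K) * real p powr - min (1 + \<sigma>) (4 * \<sigma>)"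
      using p1 by (intro mult_left_mono powr_mono) auto
    finally show ?thesis
      by (simp add: norm_mult)
  next
    case False
    have "norm (prime_monomial K s p a) \<le> real p powr (- \<sigma> * 1)"
      using norm_prime_monomial_le[OF p1 K s \<sigma>, where m = 1] weight_pos[OF K a] by simp
    then have "norm (e_factor K p a) * norm (prime_monomial K s p a)
        \<le> (1 / real p) * real p powr - \<sigma>"
      using False weight_pos[OF K a] p1
      by (intro mult_mono norm_e_factor_small_weight_le[OF K _ a(1)]) auto
    also have "\<dots> = real p powr - (1 + \<sigma>)"
    proof -
      have "real p powr - (1 + \<sigma>) = real p powr - 1 * real p powr - \<sigma>"
        unfolding minus_add_distrib by (rule powr_add)
      then show ?thesis
        using p1 by (simp add: powr_minus divide_inverse)
    qed
    also have "\<dots> \<le> 2 ^ card (pairs K) * real p powr - min (1 + \<sigma>) (4 * \<sigma>)"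
      by (rule mono) simp
    finally show ?thesis
      by (simp add: norm_mult)
  qed
qed

section \<open>The function \<open>fk\<close> is multiplicative\<close>

lemma is_square_iff_even_multiplicity:
  assumes N: "0 < (N::nat)"
  shows "is_square N \<longleftrightarrow> (\<forall>p. prime p \<longrightarrow> even (multiplicity p N))"
proof
  assume "is_square N"
  then obtain m where m: "N = m ^ 2"
    unfolding is_square_def by auto
  then have "m \<noteq> 0"
    using N by auto
  then show "\<forall>p. prime p \<longrightarrow> even (multiplicity p N)"
    using m by (auto simp: prime_elem_multiplicity_power_distrib)
next
  assume even: "\<forall>p. prime p \<longrightarrow> even (multiplicity p N)"
  have "N = (\<Prod>p\<in>prime_factors N. p ^ multiplicity p N)"
    using prime_factorization_nat[OF N] .
  also have "\<dots> = (\<Prod>p\<in>prime_factors N. (p ^ (multiplicity p N div 2)) ^ 2)"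
  proof (intro prod.cong refl)
    fix p assume "p \<in> prime_factors N"
    then have "multiplicity p N = multiplicity p N div 2 * 2"
      using even by (simp add: in_prime_factors_iff)
    then show "p ^ multiplicity p N = (p ^ (multiplicity p N div 2)) ^ 2"
      by (metis power_mult)
  qed
  also have "\<dots> = (\<Prod>p\<in>prime_factors N. p ^ (multiplicity p N div 2)) ^ 2"
    by (rule prod_power_distrib[symmetric])
  finally show "is_square N"
    unfolding is_square_def by blast
qed

lemma multiplicity_prod_pos_tuples:
  assumes K: "finite K" and n: "n \<in> pos_tuples K" and p: "prime p"
  shows "multiplicity p (\<Prod>j\<in>K. n j) = weight K (valuation_vec K p n)"
proof -
  have "multiplicity p (\<Prod>j\<in>K. n j) = (\<Sum>j\<in>K. multiplicity p (n j))"
  proof (rule prime_elem_multiplicity_prod_distrib)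
    show "0 \<notin> n ` K"
      using pos_tuples_pos[OF n] by (metis imageE less_irrefl)
  qed (use p K in simp_all)
  then show ?thesis
    by (simp add: weight_def valuation_vec_def)
qed

lemma mult_fun_eq_0I:
  fixes G :: "nat \<Rightarrow> (nat \<Rightarrow> nat) \<Rightarrow> 'b::comm_semiring_1"
  assumes K: "finite K" and n: "n \<in> pos_tuples K" and p: "prime p" "p dvd (\<Prod>j\<in>K. n j)"
    and Gp: "G p (valuation_vec K p n) = 0"
  shows "mult_fun K G n = 0"
proof -
  have "0 < (\<Prod>j\<in>K. n j)"
    using pos_tuples_pos[OF n] by (simp add: prod_pos)
  then have "p \<in> primes_le (\<Prod>j\<in>K. n j)"
    using p by (intro prime_divisor_in_primes_le) auto
  then show ?thesis
    unfolding mult_fun_def using Gp by (intro prod_zero finite_primes_le bexI[of _ p])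
qed

lemma card_prime_factors_squarefree:
  fixes n :: nat
  assumes n: "squarefree n" "0 < n" and Q: "finite Q" "\<forall>q\<in>Q. prime q" "prime_factors n \<subseteq> Q"
  shows "card (prime_factors n) = (\<Sum>p\<in>Q. multiplicity p n)"
proof -
  have "card (prime_factors n) = (\<Sum>p\<in>prime_factors n. multiplicity p n)"
    using n squarefree_factorial_semiring'[of n] by simp
  also have "\<dots> = (\<Sum>p\<in>Q. multiplicity p n)"
    using n Q
    by (intro sum.mono_neutral_left) (auto simp: in_prime_factors_iff not_dvd_imp_multiplicity_0)
  finally show ?thesis .
qed

lemma prod_moebius_mu_eq_1:
  assumes K: "finite K" and n: "n \<in> pos_tuples K" and sqf: "\<forall>j\<in>K. squarefree (n j)"
    and square: "is_square (\<Prod>j\<in>K. n j)"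
  shows "(\<Prod>j\<in>K. moebius_mu (n j)) = 1"
proof -
  define N where "N = (\<Prod>j\<in>K. n j)"
  have N: "0 < N"
    unfolding N_def using pos_tuples_pos[OF n] by (simp add: prod_pos)
  have pf_sub: "prime_factors (n j) \<subseteq> prime_factors N" if "j \<in> K" for j
    using that N K by (auto simp: in_prime_factors_iff N_def intro: dvd_trans[OF _ dvd_prodI])
  have even_sum: "even (\<Sum>p\<in>prime_factors N. multiplicity p N)"
    using square N unfolding N_def
    by (intro dvd_sum) (auto simp: is_square_iff_even_multiplicity in_prime_factors_iff)
  have "(\<Prod>j\<in>K. moebius_mu (n j)) = (\<Prod>j\<in>K. (-1) ^ card (prime_factors (n j)))"
    using sqf pos_tuples_pos[OF n] by (intro prod.cong refl) (simp add: moebius_mu_def)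
  also have "\<dots> = (-1) ^ (\<Sum>j\<in>K. card (prime_factors (n j)))"
    by (simp add: power_sum)
  also have "(\<Sum>j\<in>K. card (prime_factors (n j))) = (\<Sum>j\<in>K. \<Sum>p\<in>prime_factors N. multiplicity p (n j))"
    using sqf pos_tuples_pos[OF n] pf_sub
    by (intro sum.cong refl card_prime_factors_squarefree) (auto simp: in_prime_factors_iff)
  also have "\<dots> = (\<Sum>p\<in>prime_factors N. multiplicity p N)"
    unfolding N_def using multiplicity_prod_pos_tuples[OF K n]
    by (subst sum.swap)
      (intro sum.cong refl, auto simp: weight_def valuation_vec_def in_prime_factors_iff)
  finally show ?thesis
    using even_sum by simp
qed

lemma f_factor_valuation_vec:
  assumes K: "finite K" and n: "n \<in> pos_tuples K" and sqf: "\<forall>j\<in>K. squarefree (n j)"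
    and square: "is_square (\<Prod>j\<in>K. n j)" and p: "prime p"
  shows "f_factor K p (valuation_vec K p n)
           = (if p dvd (\<Prod>j\<in>K. n j) then of_nat p / (of_nat p + 1) else 1)"
proof -
  have N: "0 < (\<Prod>j\<in>K. n j)"
    using pos_tuples_pos[OF n] by (simp add: prod_pos)
  have "\<forall>j\<in>K. valuation_vec K p n j \<le> 1"
  proof
    fix j assume j: "j \<in> K"
    then have "n j \<noteq> 0"
      using pos_tuples_pos[OF n] by fastforce
    then show "valuation_vec K p n j \<le> 1"
      using sqf j p squarefree_factorial_semiring''[of "n j"] by (simp add: valuation_vec_def)
  qed
  moreover have "even (weight K (valuation_vec K p n))"
    using square N p
    by (simp add: is_square_iff_even_multiplicity flip: multiplicity_prod_pos_tuples[OF K n p])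
  moreover have "weight K (valuation_vec K p n) = 0 \<longleftrightarrow> \<not> p dvd (\<Prod>j\<in>K. n j)"
    using N p prime_multiplicity_gt_zero_iff[of p "\<Prod>j\<in>K. n j"]
    by (auto simp flip: multiplicity_prod_pos_tuples[OF K n p])
  ultimately show ?thesis
    by (simp add: f_factor_def)
qed

lemma mult_fun_f_factor_not_squarefree:
  assumes K: "finite K" and n: "n \<in> pos_tuples K" and j: "j \<in> K" "\<not> squarefree (n j)"
  shows "mult_fun K (f_factor K) n = 0"
proof -
  obtain p where p: "prime p" "1 < multiplicity p (n j)"
    using j squarefree_factorial_semiring''[of "n j"] pos_tuples_pos[OF n] by (auto simp: not_le)
  show ?thesis
  proof (rule mult_fun_eq_0I[OF K n p(1)])
    have "p dvd n j"
      using p(2) not_dvd_imp_multiplicity_0 by fastforce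
    then show "p dvd (\<Prod>j\<in>K. n j)"
      using j K by (meson dvd_prodI dvd_trans)
    show "f_factor K p (valuation_vec K p n) = 0"
      using f_factor_nonzero_le_1[of K p "valuation_vec K p n" j] j p(2)
      by (auto simp: valuation_vec_def)
  qed
qed

lemma mult_fun_f_factor_not_square:
  assumes K: "finite K" and n: "n \<in> pos_tuples K" and not_square: "\<not> is_square (\<Prod>j\<in>K. n j)"
  shows "mult_fun K (f_factor K) n = 0"
proof -
  have "0 < (\<Prod>j\<in>K. n j)"
    using pos_tuples_pos[OF n] by (simp add: prod_pos)
  then obtain p where p: "prime p" "odd (multiplicity p (\<Prod>j\<in>K. n j))"
    using not_square is_square_iff_even_multiplicity by blast
  show ?thesis
  proof (rule mult_fun_eq_0I[OF K n p(1)])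
    show "p dvd (\<Prod>j\<in>K. n j)"
      using p(2) not_dvd_imp_multiplicity_0 by fastforce
    show "f_factor K p (valuation_vec K p n) = 0"
      using f_factor_nonzero_even p multiplicity_prod_pos_tuples[OF K n p(1)] by metis
  qed
qed

lemma mult_fun_f_factor_square:
  assumes K: "finite K" and n: "n \<in> pos_tuples K" and sqf: "\<forall>j\<in>K. squarefree (n j)"
    and square: "is_square (\<Prod>j\<in>K. n j)"
  shows "mult_fun K (f_factor K) n = (\<Prod>p\<in>prime_factors (\<Prod>j\<in>K. n j). of_nat p / (of_nat p + 1))"
proof -
  define N where "N = (\<Prod>j\<in>K. n j)"
  have N: "0 < N"
    unfolding N_def using pos_tuples_pos[OF n] by (simp add: prod_pos)
  have "mult_fun K (f_factor K) n
      = (\<Prod>p\<in>primes_le N. if p \<in> prime_factors N then of_nat p / (of_nat p + 1) else 1)"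
    unfolding mult_fun_def N_def[symmetric] using sqf square N
    by (intro prod.cong refl)
      (auto simp: f_factor_valuation_vec[OF K n] N_def in_prime_factors_iff dest: prime_of_primes_le)
  also have "\<dots> = (\<Prod>p\<in>prime_factors N. of_nat p / (of_nat p + 1))"
    using N by (intro prod.mono_neutral_cong_right)
      (auto simp: in_prime_factors_iff intro: prime_divisor_in_primes_le)
  finally show ?thesis
    unfolding N_def .
qed

theorem fk_eq_mult_fun:
  assumes n: "n \<in> pos_tuples {1..k}"
  shows "complex_of_real (fk k n) = mult_fun {1..k} (f_factor {1..k}) n"
proof -
  let ?K = "{1..k}"
  have fk: "fk k n = (\<Prod>j\<in>?K. real_of_int (moebius_mu (n j)))
      * (\<Prod>p\<in>prime_factors (\<Prod>j\<in>?K. n j). real p / (real p + 1))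
      * (if is_square (\<Prod>j\<in>?K. n j) then 1 else 0)"
    unfolding fk_def Let_def ..
  consider (not_squarefree) j where "j \<in> ?K" "\<not> squarefree (n j)"
    | (not_square) "\<not> is_square (\<Prod>j\<in>?K. n j)"
    | (square) "\<forall>j\<in>?K. squarefree (n j)" "is_square (\<Prod>j\<in>?K. n j)"
    by blast
  then show ?thesis
  proof cases
    case not_squarefree
    then have "(\<Prod>j\<in>?K. real_of_int (moebius_mu (n j))) = 0"
      by (intro prod_zero bexI[of _ j]) (simp_all add: moebius_mu_def)
    moreover have "mult_fun ?K (f_factor ?K) n = 0"
      using not_squarefree by (intro mult_fun_f_factor_not_squarefree[OF _ n]) auto
    ultimately show ?thesis
      by (simp add: fk)
  next
    case not_square
    then have "mult_fun ?K (f_factor ?K) n = 0"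
      by (rule mult_fun_f_factor_not_square[OF finite_atLeastAtMost n])
    then show ?thesis
      using not_square by (simp add: fk)
  next
    case square
    then have "mult_fun ?K (f_factor ?K) n
        = (\<Prod>p\<in>prime_factors (\<Prod>j\<in>?K. n j). of_nat p / (of_nat p + 1))"
      by (intro mult_fun_f_factor_square[OF finite_atLeastAtMost n])
    moreover have "(\<Prod>j\<in>?K. moebius_mu (n j)) = 1"
      using square by (intro prod_moebius_mu_eq_1[OF finite_atLeastAtMost n])
    ultimately show ?thesis
      using square by (simp add: fk flip: of_int_prod)
  qed
qed

section \<open>The factorization of the Dirichlet series of \<open>fk\<close>\<close>

lemma uniform_Re_lower_bound:
  assumes "finite K" "\<forall>j\<in>K. c < Re (s j)"
  obtains \<sigma> where "c < \<sigma>" "\<forall>j\<in>K. \<sigma> \<le> Re (s j)"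
proof (cases "K = {}")
  case True
  then show ?thesis
    using that[of "c + 1"] by simp
next
  case False
  then show ?thesis
    using that[of "Min ((\<lambda>j. Re (s j)) ` K)"] assms by auto
qed

lemma f_factor_bounded_euler_factors:
  assumes K: "finite K" and s: "\<forall>j\<in>K. 1/2 < Re (s j)"
  obtains \<delta> where "bounded_euler_factors K (f_factor K) 1 s 1 \<delta>"
proof -
  obtain \<sigma> where \<sigma>: "1/2 < \<sigma>" "\<forall>j\<in>K. \<sigma> \<le> Re (s j)"
    using uniform_Re_lower_bound[OF K s] .
  have "bounded_euler_factors K (f_factor K) 1 s 1 (2 * \<sigma>)"
  proof
    show "norm (f_factor K p a * prime_monomial K s p a) \<le> 1 * real p powr - (2 * \<sigma>)"
      if "prime p" "a \<in> exp_box K 1" "a \<noteq> zero_vec K" for p a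
      using norm_f_factor_monomial_le[OF K that(1) \<sigma>(2) _ that(2,3)] \<sigma>(1) by simp
  qed (use K \<sigma> f_factor_zero_vec f_factor_nonzero_le_1 in auto)
  then show ?thesis ..
qed

lemma e_factor_bounded_euler_factors:
  assumes K: "finite K" and s: "\<forall>j\<in>K. 1/4 < Re (s j)"
  obtains C \<delta> where "bounded_euler_factors K (e_factor K) (e_degree_bound K) s C \<delta>"
proof -
  obtain \<sigma> where \<sigma>: "1/4 < \<sigma>" "\<forall>j\<in>K. \<sigma> \<le> Re (s j)"
    using uniform_Re_lower_bound[OF K s] .
  have "bounded_euler_factors K (e_factor K) (e_degree_bound K) s
          (2 ^ card (pairs K)) (min (1 + \<sigma>) (4 * \<sigma>))"
  proof
    show "norm (e_factor K p a * prime_monomial K s p a)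
        \<le> 2 ^ card (pairs K) * real p powr - min (1 + \<sigma>) (4 * \<sigma>)"
      if "prime p" "a \<in> exp_box K (e_degree_bound K)" "a \<noteq> zero_vec K" for p a
      using norm_e_factor_monomial_le[OF K that(1) \<sigma>(2) _ that(2,3)] \<sigma>(1) by simp
  qed (use K \<sigma> e_factor_zero_vec e_factor_support in auto)
  then show ?thesis ..
qed

lemma prod_zeta_mult_partial_euler_products_tendsto:
  assumes K: "finite K" and s: "\<forall>j\<in>K. 1/2 < Re (s j)"
  shows "(\<lambda>N. (\<Prod>I\<in>pairs K. zeta (\<Sum>j\<in>I. s j))
            * (\<Prod>p\<in>primes_le N. \<Prod>I\<in>pairs K. 1 - inverse (of_nat p powr (\<Sum>j\<in>I. s j))))
         \<longlonglongrightarrow> 1"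
proof -
  have "(\<lambda>N. \<Prod>I\<in>pairs K. zeta (\<Sum>j\<in>I. s j)
            * (\<Prod>p\<in>primes_le N. 1 - inverse (of_nat p powr (\<Sum>j\<in>I. s j)))) \<longlonglongrightarrow> (\<Prod>I\<in>pairs K. 1)"
  proof (rule tendsto_prod)
    fix I assume "I \<in> pairs K"
    then have I: "finite I" "I \<subseteq> K" "card I = 2"
      using K by (auto simp: pairs_def intro: finite_subset)
    have "(\<Sum>j\<in>I. 1/2) < (\<Sum>j\<in>I. Re (s j))"
      using I s by (intro sum_strict_mono) (auto simp: card_gt_0_iff[symmetric])
    then have "1 < Re (\<Sum>j\<in>I. s j)"
      using I by (simp add: Re_sum)
    then show "(\<lambda>N. zeta (\<Sum>j\<in>I. s j)
        * (\<Prod>p\<in>primes_le N. 1 - inverse (of_nat p powr (\<Sum>j\<in>I. s j)))) \<longlonglongrightarrow> 1"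
      by (rule zeta_mult_partial_euler_product_tendsto)
  qed
  then show ?thesis
    by (simp add: prod.distrib prod.swap[of _ "primes_le _"])
qed

lemma infsum_f_factor_eq_prod_zeta_mult_infsum_e_factor:
  assumes K: "finite K" and s: "\<forall>j\<in>K. 1/2 < Re (s j)"
  shows "(\<Sum>\<^sub>\<infinity>n\<in>pos_tuples K. mult_fun K (f_factor K) n / tuple_powr K n s)
       = (\<Prod>I\<in>pairs K. zeta (\<Sum>j\<in>I. s j))
         * (\<Sum>\<^sub>\<infinity>n\<in>pos_tuples K. mult_fun K (e_factor K) n / tuple_powr K n s)"
    (is "?F = ?Z * ?E")
proof -
  define F_N where "F_N N = (\<Prod>p\<in>primes_le N. \<Sum>a\<in>exp_box K 1.
                                 f_factor K p a * prime_monomial K s p a)" for N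
  define E_N where "E_N N = (\<Prod>p\<in>primes_le N. \<Sum>a\<in>exp_box K (e_degree_bound K).
                                 e_factor K p a * prime_monomial K s p a)" for N
  define Z_N where "Z_N N = (\<Prod>p\<in>primes_le N. \<Prod>I\<in>pairs K.
                                 1 - inverse (of_nat p powr (\<Sum>j\<in>I. s j)))" for N
  obtain \<delta>\<^sub>F where "bounded_euler_factors K (f_factor K) 1 s 1 \<delta>\<^sub>F"
    using f_factor_bounded_euler_factors[OF K s] .
  then have F: "F_N \<longlonglongrightarrow> ?F"
    unfolding F_N_def by (rule bounded_euler_factors.euler_product_tendsto)
  have "\<forall>j\<in>K. 1/4 < Re (s j)"
    using s by force
  then obtain C \<delta>\<^sub>E where "bounded_euler_factors K (e_factor K) (e_degree_bound K) s C \<delta>\<^sub>E"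
    using e_factor_bounded_euler_factors[OF K] by blast
  then have E: "E_N \<longlonglongrightarrow> ?E"
    unfolding E_N_def by (rule bounded_euler_factors.euler_product_tendsto)
  have Z: "(\<lambda>N. ?Z * Z_N N) \<longlonglongrightarrow> 1"
    unfolding Z_N_def using K s by (rule prod_zeta_mult_partial_euler_products_tendsto)
  have "E_N N = F_N N * Z_N N" for N
    unfolding E_N_def F_N_def Z_N_def
    by (simp add: e_euler_factor_eq[OF K] prime_gt_0_nat prime_of_primes_le prod.distrib)
  then have "(\<lambda>N. ?Z * E_N N) \<longlonglongrightarrow> ?F * 1"
    using tendsto_mult[OF F Z] by (simp add: mult.left_commute)
  moreover have "(\<lambda>N. ?Z * E_N N) \<longlonglongrightarrow> ?Z * ?E"
    using E by (rule tendsto_mult_left)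
  ultimately show ?thesis
    using LIMSEQ_unique by fastforce
qed

lemma tuples_eq_pos_tuples: "tuples k = pos_tuples {1..k}"
  unfolding tuples_def pos_tuples_def ..

lemma npow_eq_tuple_powr: "npow k = tuple_powr {1..k}"
  unfolding npow_def tuple_powr_def by (simp add: fun_eq_iff)

lemma fk_div_npow_eq:
  assumes "n \<in> tuples k"
  shows "complex_of_real (fk k n) / npow k n s
           = mult_fun {1..k} (f_factor {1..k}) n / tuple_powr {1..k} n s"
  using assms by (simp add: tuples_eq_pos_tuples npow_eq_tuple_powr fk_eq_mult_fun)

theorem lemma2p1:
  fixes k :: nat
  assumes "k \<ge> 1"
  shows "\<exists>e :: (nat \<Rightarrow> nat) \<Rightarrow> complex.
    (\<forall>s :: nat \<Rightarrow> complex. (\<forall>j\<in>{1..k}. Re (s j) > 1/4) \<longrightarrow>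
        (\<lambda>n. norm (e n / npow k n s)) summable_on tuples k)
  \<and> (\<forall>s :: nat \<Rightarrow> complex. (\<forall>j\<in>{1..k}. Re (s j) > 1/2) \<longrightarrow>
        (\<lambda>n. norm (complex_of_real (fk k n) / npow k n s)) summable_on tuples k
      \<and> (\<Sum>\<^sub>\<infinity>n\<in>tuples k. complex_of_real (fk k n) / npow k n s)
        = (\<Prod>I\<in>{I. I \<subseteq> {1..k} \<and> card I = 2}. zeta (\<Sum>j\<in>I. s j))
          * (\<Sum>\<^sub>\<infinity>n\<in>tuples k. e n / npow k n s))"
proof -
  let ?K = "{1..k}"
  have K: "finite ?K"
    by simp
  show ?thesis
  proof (intro exI[of _ "mult_fun ?K (e_factor ?K)"] conjI allI impI)
    fix s :: "nat \<Rightarrow> complex" assume "\<forall>j\<in>?K. 1/4 < Re (s j)"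
    then obtain C \<delta> where "bounded_euler_factors ?K (e_factor ?K) (e_degree_bound ?K) s C \<delta>"
      using e_factor_bounded_euler_factors[OF K] by blast
    then show "(\<lambda>n. norm (mult_fun ?K (e_factor ?K) n / npow k n s)) summable_on tuples k"
      unfolding tuples_eq_pos_tuples npow_eq_tuple_powr by (rule bounded_euler_factors.abs_summable)
  next
    fix s :: "nat \<Rightarrow> complex" assume "\<forall>j\<in>?K. 1/2 < Re (s j)"
    then obtain \<delta> where "bounded_euler_factors ?K (f_factor ?K) 1 s 1 \<delta>"
      using f_factor_bounded_euler_factors[OF K] by blast
    then have "(\<lambda>n. norm (mult_fun ?K (f_factor ?K) n / tuple_powr ?K n s)) summable_on tuples k"
      unfolding tuples_eq_pos_tuples by (rule bounded_euler_factors.abs_summable)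
    then show "(\<lambda>n. norm (complex_of_real (fk k n) / npow k n s)) summable_on tuples k"
      using summable_on_cong[of "tuples k"] fk_div_npow_eq by (metis (no_types, lifting))
  next
    fix s :: "nat \<Rightarrow> complex" assume s: "\<forall>j\<in>?K. 1/2 < Re (s j)"
    have "(\<Sum>\<^sub>\<infinity>n\<in>tuples k. complex_of_real (fk k n) / npow k n s)
        = (\<Sum>\<^sub>\<infinity>n\<in>tuples k. mult_fun ?K (f_factor ?K) n / tuple_powr ?K n s)"
      using fk_div_npow_eq by (rule infsum_cong)
    then show "(\<Sum>\<^sub>\<infinity>n\<in>tuples k. complex_of_real (fk k n) / npow k n s)
        = (\<Prod>I\<in>{I. I \<subseteq> ?K \<and> card I = 2}. zeta (\<Sum>j\<in>I. s j))
          * (\<Sum>\<^sub>\<infinity>n\<in>tuples k. mult_fun ?K (e_factor ?K) n / npow k n s)"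
      using infsum_f_factor_eq_prod_zeta_mult_infsum_e_factor[OF K s]
      by (simp add: tuples_eq_pos_tuples npow_eq_tuple_powr pairs_def)
  qed
qed

end
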